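(* Let $\mathcal{U}$ be a strict Fraïssé class, let $\mathbf{T}\in\overline{\mathcal{U}}$, and let $\mathcal{C}\subseteq\mathcal{U}$ be a Fraïssé class that is free in $\mathcal{U}$. Then there exists a universal homogeneous homomorphism $u:\mathbf{U}\to\mathbf{T}$ within $\overline{\mathcal{C}}$. Moreover, if $\hat u:\hat{\mathbf{U}}\to\mathbf{T}$ is another universal homogeneous homomorphism to $\mathbf{T}$ within $\overline{\mathcal{C}}$, then there is an isomorphism $h:\hat{\mathbf{U}}\to\mathbf{U}$ with $\hat u=u\circ h$.
   Context: Structures are first-order structures over a signature with arbitrarily many relation symbols and countably many function and constant symbols; an embedding is an injective homomorphism that also reflects all relations. An age is a class of finitely generated structures of one signature with countably many isomorphism types, closed under (isomorphic copies of) finitely generated substructures, and with the joint embedding property (any two members embed into a common member). For an age $\mathcal{C}$, $\overline{\mathcal{C}}$ is the class of all countable structures all of whose finitely generated substructures are isomorphic to members of $\mathcal{C}$. A Fraïssé class is an age with the amalgamation property (for embeddings $f_i:\mathbf{A}\hookrightarrow\mathbf{B}_i$ in $\mathcal{C}$ there are $\mathbf{C}\in\mathcal{C}$ and embeddings $g_i:\mathbf{B}_i\hookrightarrow\mathbf{C}$ with $g_1f_1=g_2f_2$). A Fraïssé class $\mathcal{U}$ is strict if for all $\mathbf{A},\mathbf{B}_1,\mathbf{B}_2\in\mathcal{U}$ and embeddings $f_i:\mathbf{A}\hookrightarrow\mathbf{B}_i$ there are $\mathbf{C}\in\mathcal{U}$ and homomorphisms $g_i:\mathbf{B}_i\to\mathbf{C}$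 such that $(\mathbf{C},(g_1,g_2))$ is a pushout of $f_1,f_2$ in the category of structures in $\overline{\mathcal{U}}$ with all homomorphisms (such a pushout is called the canonical amalgam). A Fraïssé class $\mathcal{C}\subseteq\mathcal{U}$ is free in $\mathcal{U}$ if it is closed under these canonical amalgams in $\mathcal{U}$. For $\mathbf{U}\in\overline{\mathcal{C}}$ and a countable structure $\mathbf{T}$, a homomorphism $u:\mathbf{U}\to\mathbf{T}$ is universal within $\overline{\mathcal{C}}$ if for every $\mathbf{A}\in\overline{\mathcal{C}}$ and homomorphism $h:\mathbf{A}\to\mathbf{T}$ there is an embedding $\iota:\mathbf{A}\hookrightarrow\mathbf{U}$ with $h=u\circ\iota$; it is homogeneous if for every finitely generated substructure $\mathbf{A}\le\mathbf{U}$ and every embedding $\iota:\mathbf{A}\hookrightarrow\mathbf{U}$ with $u\circ\iota=u\restriction_A$ there is an automorphism $\alpha$ of $\mathbf{U}$ with $u\circ\alpha=u$ and $\alpha\restriction_A=\iota$. *)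

theory Defs
  imports "HOL-Library.Countable_Set"
begin

text \<open>A signature is a pair (relation arities, function arities);
  relation symbols range over an arbitrary type 'r, function (and constant = 0-ary function)
  symbols over a countable type 'f. Structures have carriers that are subsets of nat, which
  suffices for all countable (in particular finitely generated) structures up to isomorphism.\<close>

record ('r, 'f) struc =
  dom :: "nat set"
  rel :: "'r \<Rightarrow> nat list \<Rightarrow> bool"
  fn  :: "'f \<Rightarrow> nat list \<Rightarrow> nat"

type_synonym ('r, 'f) sig = "('r \<Rightarrow> nat) \<times> ('f \<Rightarrow> nat)"

definition wf_struc :: "('r, 'f) sig \<Rightarrow> ('r, 'f) struc \<Rightarrow> bool" where
  "wf_struc \<sigma> A \<longleftrightarrow>
     (\<forall>f xs. set xs \<subseteq> dom A \<and> length xs = snd \<sigma> f \<longrightarrow> fn A f xs \<in> dom A) \<and>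
     (\<forall>r xs. rel A r xs \<longrightarrow> set xs \<subseteq> dom A \<and> length xs = fst \<sigma> r)"

definition hom :: "('r, 'f) sig \<Rightarrow> (nat \<Rightarrow> nat) \<Rightarrow> ('r, 'f) struc \<Rightarrow> ('r, 'f) struc \<Rightarrow> bool" where
  "hom \<sigma> h A B \<longleftrightarrow> h ` dom A \<subseteq> dom B \<and>
     (\<forall>f xs. set xs \<subseteq> dom A \<and> length xs = snd \<sigma> f \<longrightarrow> h (fn A f xs) = fn B f (map h xs)) \<and>
     (\<forall>r xs. set xs \<subseteq> dom A \<and> length xs = fst \<sigma> r \<and> rel A r xs \<longrightarrow> rel B r (map h xs))"

definition emb :: "('r, 'f) sig \<Rightarrow> (nat \<Rightarrow> nat) \<Rightarrow> ('r, 'f) struc \<Rightarrow> ('r, 'f) struc \<Rightarrow> bool" where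
  "emb \<sigma> h A B \<longleftrightarrow> hom \<sigma> h A B \<and> inj_on h (dom A) \<and>
     (\<forall>r xs. set xs \<subseteq> dom A \<and> length xs = fst \<sigma> r \<and> rel B r (map h xs) \<longrightarrow> rel A r xs)"

definition iso :: "('r, 'f) sig \<Rightarrow> (nat \<Rightarrow> nat) \<Rightarrow> ('r, 'f) struc \<Rightarrow> ('r, 'f) struc \<Rightarrow> bool" where
  "iso \<sigma> h A B \<longleftrightarrow> emb \<sigma> h A B \<and> h ` dom A = dom B"

definition isomorphic :: "('r, 'f) sig \<Rightarrow> ('r, 'f) struc \<Rightarrow> ('r, 'f) struc \<Rightarrow> bool" where
  "isomorphic \<sigma> A B \<longleftrightarrow> (\<exists>h. iso \<sigma> h A B)"

definition substr :: "('r, 'f) sig \<Rightarrow> ('r, 'f) struc \<Rightarrow> ('r, 'f) struc \<Rightarrow> bool" where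
  "substr \<sigma> B A \<longleftrightarrow> wf_struc \<sigma> B \<and> wf_struc \<sigma> A \<and> dom B \<subseteq> dom A \<and> emb \<sigma> (\<lambda>x. x) B A"

definition fin_gen :: "('r, 'f) sig \<Rightarrow> ('r, 'f) struc \<Rightarrow> bool" where
  "fin_gen \<sigma> A \<longleftrightarrow> wf_struc \<sigma> A \<and>
     (\<exists>X. finite X \<and> X \<subseteq> dom A \<and> (\<forall>B. substr \<sigma> B A \<and> X \<subseteq> dom B \<longrightarrow> dom B = dom A))"

definition is_age :: "('r, 'f) sig \<Rightarrow> ('r, 'f) struc set \<Rightarrow> bool" where
  "is_age \<sigma> K \<longleftrightarrow> K \<noteq> {} \<and>
     (\<forall>A\<in>K. fin_gen \<sigma> A) \<and>
     (\<exists>S. countable S \<and> S \<subseteq> K \<and> (\<forall>A\<in>K. \<exists>B\<in>S. isomorphic \<sigma> A B)) \<and>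
     (\<forall>A\<in>K. \<forall>B C. substr \<sigma> B A \<and> fin_gen \<sigma> B \<and> wf_struc \<sigma> C \<and> isomorphic \<sigma> C B \<longrightarrow> C \<in> K) \<and>
     (\<forall>A\<in>K. \<forall>B\<in>K. \<exists>C\<in>K. \<exists>f g. emb \<sigma> f A C \<and> emb \<sigma> g B C)"

definition amalg_prop :: "('r, 'f) sig \<Rightarrow> ('r, 'f) struc set \<Rightarrow> bool" where
  "amalg_prop \<sigma> K \<longleftrightarrow>
     (\<forall>A\<in>K. \<forall>B1\<in>K. \<forall>B2\<in>K. \<forall>f1 f2. emb \<sigma> f1 A B1 \<and> emb \<sigma> f2 A B2 \<longrightarrow>
        (\<exists>C\<in>K. \<exists>g1 g2. emb \<sigma> g1 B1 C \<and> emb \<sigma> g2 B2 C \<and> (\<forall>x\<in>dom A. g1 (f1 x) = g2 (f2 x))))"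

definition fraisse :: "('r, 'f) sig \<Rightarrow> ('r, 'f) struc set \<Rightarrow> bool" where
  "fraisse \<sigma> K \<longleftrightarrow> is_age \<sigma> K \<and> amalg_prop \<sigma> K"

text \<open>The class of countable structures all of whose f.g. substructures are isomorphic
  to members of K (overline K).\<close>
definition cl :: "('r, 'f) sig \<Rightarrow> ('r, 'f) struc set \<Rightarrow> ('r, 'f) struc set" where
  "cl \<sigma> K = {A. wf_struc \<sigma> A \<and>
     (\<forall>B. substr \<sigma> B A \<and> fin_gen \<sigma> B \<longrightarrow> (\<exists>C\<in>K. isomorphic \<sigma> B C))}"

definition pushout :: "('r, 'f) sig \<Rightarrow> ('r, 'f) struc set \<Rightarrow> ('r, 'f) struc \<Rightarrow> ('r, 'f) struc \<Rightarrow>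
    ('r, 'f) struc \<Rightarrow> (nat \<Rightarrow> nat) \<Rightarrow> (nat \<Rightarrow> nat) \<Rightarrow> ('r, 'f) struc \<Rightarrow> (nat \<Rightarrow> nat) \<Rightarrow> (nat \<Rightarrow> nat) \<Rightarrow> bool" where
  "pushout \<sigma> K A B1 B2 f1 f2 D g1 g2 \<longleftrightarrow>
     D \<in> cl \<sigma> K \<and> hom \<sigma> g1 B1 D \<and> hom \<sigma> g2 B2 D \<and> (\<forall>x\<in>dom A. g1 (f1 x) = g2 (f2 x)) \<and>
     (\<forall>E\<in>cl \<sigma> K. \<forall>k1 k2. hom \<sigma> k1 B1 E \<and> hom \<sigma> k2 B2 E \<and> (\<forall>x\<in>dom A. k1 (f1 x) = k2 (f2 x)) \<longrightarrow>
        (\<exists>k. hom \<sigma> k D E \<and> (\<forall>x\<in>dom B1. k (g1 x) = k1 x) \<and> (\<forall>x\<in>dom B2. k (g2 x) = k2 x) \<and>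
             (\<forall>k'. hom \<sigma> k' D E \<and> (\<forall>x\<in>dom B1. k' (g1 x) = k1 x) \<and> (\<forall>x\<in>dom B2. k' (g2 x) = k2 x)
                   \<longrightarrow> (\<forall>x\<in>dom D. k' x = k x))))"

definition strict_fraisse :: "('r, 'f) sig \<Rightarrow> ('r, 'f) struc set \<Rightarrow> bool" where
  "strict_fraisse \<sigma> U \<longleftrightarrow> fraisse \<sigma> U \<and>
     (\<forall>A\<in>U. \<forall>B1\<in>U. \<forall>B2\<in>U. \<forall>f1 f2. emb \<sigma> f1 A B1 \<and> emb \<sigma> f2 A B2 \<longrightarrow>
        (\<exists>D\<in>U. \<exists>g1 g2. pushout \<sigma> U A B1 B2 f1 f2 D g1 g2))"

definition free_in :: "('r, 'f) sig \<Rightarrow> ('r, 'f) struc set \<Rightarrow> ('r, 'f) struc set \<Rightarrow> bool" where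
  "free_in \<sigma> C U \<longleftrightarrow>
     (\<forall>A\<in>C. \<forall>B1\<in>C. \<forall>B2\<in>C. \<forall>f1 f2 D g1 g2.
        emb \<sigma> f1 A B1 \<and> emb \<sigma> f2 A B2 \<and> D \<in> U \<and> pushout \<sigma> U A B1 B2 f1 f2 D g1 g2 \<longrightarrow> D \<in> C)"

definition universal_within :: "('r, 'f) sig \<Rightarrow> ('r, 'f) struc set \<Rightarrow> (nat \<Rightarrow> nat) \<Rightarrow>
    ('r, 'f) struc \<Rightarrow> ('r, 'f) struc \<Rightarrow> bool" where
  "universal_within \<sigma> C u U T \<longleftrightarrow> U \<in> cl \<sigma> C \<and> wf_struc \<sigma> T \<and> hom \<sigma> u U T \<and>
     (\<forall>A\<in>cl \<sigma> C. \<forall>h. hom \<sigma> h A T \<longrightarrow> (\<exists>\<iota>. emb \<sigma> \<iota> A U \<and> (\<forall>x\<in>dom A. h x = u (\<iota> x))))"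

definition homogeneous_hom :: "('r, 'f) sig \<Rightarrow> (nat \<Rightarrow> nat) \<Rightarrow> ('r, 'f) struc \<Rightarrow> ('r, 'f) struc \<Rightarrow> bool" where
  "homogeneous_hom \<sigma> u U T \<longleftrightarrow> hom \<sigma> u U T \<and>
     (\<forall>A \<iota>. substr \<sigma> A U \<and> fin_gen \<sigma> A \<and> emb \<sigma> \<iota> A U \<and> (\<forall>x\<in>dom A. u (\<iota> x) = u x) \<longrightarrow>
        (\<exists>\<alpha>. iso \<sigma> \<alpha> U U \<and> (\<forall>x\<in>dom U. u (\<alpha> x) = u x) \<and> (\<forall>x\<in>dom A. \<alpha> x = \<iota> x)))"

end

theory Submission
  imports Defs
begin

text \<open>The homomorphism \<open>u : U \<rightarrow> T\<close> is characterised by an extension property: whenever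
  \<open>A \<hookrightarrow> B\<close> in \<open>C\<close>, an embedding of \<open>A\<close> into \<open>U\<close> over \<open>T\<close> extends to one of \<open>B\<close> over \<open>T\<close>. A forth
  argument makes such a \<open>u\<close> universal, and back and forth between two of them yields homogeneity and
  uniqueness up to isomorphism over \<open>T\<close>; conversely universality and homogeneity give back the extension
  property. To construct \<open>u\<close>, take the union of a chain of structures in \<open>C\<close> with compatible maps to
  \<open>T\<close>, treating the countably many extension tasks one after another. Each task is solved by the
  canonical amalgam: freeness puts it in \<open>C\<close>, and being a pushout it maps to \<open>T\<close> compatibly.\<close>

section \<open>Generated substructures\<close>

definition fn_closed :: "('r,'f) sig \<Rightarrow> ('r,'f) struc \<Rightarrow> nat set \<Rightarrow> bool" where
  "fn_closed \<sigma> A S \<longleftrightarrow> S \<subseteq> dom A \<and>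
     (\<forall>F xs. set xs \<subseteq> S \<and> length xs = snd \<sigma> F \<longrightarrow> fn A F xs \<in> S)"

definition gen_set :: "('r,'f) sig \<Rightarrow> ('r,'f) struc \<Rightarrow> nat set \<Rightarrow> nat set" where
  "gen_set \<sigma> A X = \<Inter>{S. fn_closed \<sigma> A S \<and> X \<subseteq> S}"

definition restrict_struc :: "('r,'f) struc \<Rightarrow> nat set \<Rightarrow> ('r,'f) struc" where
  "restrict_struc A S = \<lparr>dom = S, rel = (\<lambda>R xs. rel A R xs \<and> set xs \<subseteq> S), fn = fn A\<rparr>"

definition gen_struc :: "('r,'f) sig \<Rightarrow> ('r,'f) struc \<Rightarrow> nat set \<Rightarrow> ('r,'f) struc" where
  "gen_struc \<sigma> A X = restrict_struc A (gen_set \<sigma> A X)"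

lemma restrict_struc_simps[simp]: "dom (restrict_struc A S) = S" "fn (restrict_struc A S) = fn A"
  "rel (restrict_struc A S) R xs \<longleftrightarrow> rel A R xs \<and> set xs \<subseteq> S"
  by (auto simp: restrict_struc_def)

lemma gen_struc_simps[simp]: "dom (gen_struc \<sigma> A X) = gen_set \<sigma> A X" "fn (gen_struc \<sigma> A X) = fn A"
  "rel (gen_struc \<sigma> A X) R xs \<longleftrightarrow> rel A R xs \<and> set xs \<subseteq> gen_set \<sigma> A X"
  by (auto simp: gen_struc_def)

lemma fn_closed_dom: "wf_struc \<sigma> A \<Longrightarrow> fn_closed \<sigma> A (dom A)"
  by (auto simp: wf_struc_def fn_closed_def)

lemma gen_set_subset_dom: "wf_struc \<sigma> A \<Longrightarrow> X \<subseteq> dom A \<Longrightarrow> gen_set \<sigma> A X \<subseteq> dom A"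
  unfolding gen_set_def using fn_closed_dom by blast

lemma gen_set_least: "fn_closed \<sigma> A S \<Longrightarrow> X \<subseteq> S \<Longrightarrow> gen_set \<sigma> A X \<subseteq> S"
  unfolding gen_set_def by blast

lemma gen_set_superset: "X \<subseteq> gen_set \<sigma> A X"
  unfolding gen_set_def by blast

lemma fn_closed_gen_set: "wf_struc \<sigma> A \<Longrightarrow> X \<subseteq> dom A \<Longrightarrow> fn_closed \<sigma> A (gen_set \<sigma> A X)"
  using gen_set_subset_dom[of \<sigma> A X] unfolding fn_closed_def gen_set_def by blast

lemma gen_set_mono: "wf_struc \<sigma> A \<Longrightarrow> Y \<subseteq> dom A \<Longrightarrow> X \<subseteq> Y \<Longrightarrow> gen_set \<sigma> A X \<subseteq> gen_set \<sigma> A Y"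
  by (meson fn_closed_gen_set gen_set_superset gen_set_least order_trans)

lemma gen_set_fn: "wf_struc \<sigma> A \<Longrightarrow> X \<subseteq> dom A \<Longrightarrow> set xs \<subseteq> gen_set \<sigma> A X \<Longrightarrow> length xs = snd \<sigma> F
   \<Longrightarrow> fn A F xs \<in> gen_set \<sigma> A X"
  using fn_closed_gen_set unfolding fn_closed_def by blast

lemma wf_restrict_struc: "wf_struc \<sigma> A \<Longrightarrow> fn_closed \<sigma> A S \<Longrightarrow> wf_struc \<sigma> (restrict_struc A S)"
  unfolding wf_struc_def fn_closed_def by auto

lemma substr_restrict_struc: "wf_struc \<sigma> A \<Longrightarrow> fn_closed \<sigma> A S \<Longrightarrow> substr \<sigma> (restrict_struc A S) A"
  unfolding substr_def emb_def hom_def using wf_restrict_struc[of \<sigma> A S]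
  by (auto simp: fn_closed_def wf_struc_def)

lemma substr_gen_struc: "wf_struc \<sigma> A \<Longrightarrow> X \<subseteq> dom A \<Longrightarrow> substr \<sigma> (gen_struc \<sigma> A X) A"
  unfolding gen_struc_def by (intro substr_restrict_struc fn_closed_gen_set)

lemma wf_gen_struc: "wf_struc \<sigma> A \<Longrightarrow> X \<subseteq> dom A \<Longrightarrow> wf_struc \<sigma> (gen_struc \<sigma> A X)"
  using substr_gen_struc substr_def by blast

lemma substr_fn: "substr \<sigma> B A \<Longrightarrow> set xs \<subseteq> dom B \<Longrightarrow> length xs = snd \<sigma> F \<Longrightarrow> fn A F xs = fn B F xs"
  unfolding substr_def emb_def hom_def by (auto simp: map_idI)

lemma substr_rel: "substr \<sigma> B A \<Longrightarrow> set xs \<subseteq> dom B \<Longrightarrow> rel A R xs = rel B R xs"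
  unfolding substr_def emb_def hom_def wf_struc_def by (metis map_idI)

lemma fn_closed_substr: "substr \<sigma> B A \<Longrightarrow> fn_closed \<sigma> A (dom B)"
  unfolding fn_closed_def using substr_fn[of \<sigma> B A]
  by (metis (no_types, lifting) substr_def wf_struc_def)

lemma fin_gen_gen_struc: "wf_struc \<sigma> A \<Longrightarrow> finite X \<Longrightarrow> X \<subseteq> dom A \<Longrightarrow> fin_gen \<sigma> (gen_struc \<sigma> A X)"
  unfolding fin_gen_def
proof (intro conjI exI[of _ X])
  assume w: "wf_struc \<sigma> A" and f: "finite X" and X: "X \<subseteq> dom A"
  show "wf_struc \<sigma> (gen_struc \<sigma> A X)" using w X by (rule wf_gen_struc)
  show "finite X" by fact
  show "X \<subseteq> dom (gen_struc \<sigma> A X)" using gen_set_superset by simp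
  show "\<forall>B. substr \<sigma> B (gen_struc \<sigma> A X) \<and> X \<subseteq> dom B \<longrightarrow> dom B = dom (gen_struc \<sigma> A X)"
  proof (intro allI impI)
    fix B assume B: "substr \<sigma> B (gen_struc \<sigma> A X) \<and> X \<subseteq> dom B"
    have "fn_closed \<sigma> (gen_struc \<sigma> A X) (dom B)" using B fn_closed_substr by blast
    hence "fn_closed \<sigma> A (dom B)" using gen_set_subset_dom[OF w X] unfolding fn_closed_def by auto
    hence "gen_set \<sigma> A X \<subseteq> dom B" using B gen_set_least by blast
    moreover have "dom B \<subseteq> gen_set \<sigma> A X" using B unfolding substr_def by simp
    ultimately show "dom B = dom (gen_struc \<sigma> A X)" by simp
  qed
qed

lemma fin_gen_generators: "fin_gen \<sigma> A \<Longrightarrow> \<exists>X. finite X \<and> X \<subseteq> dom A \<and> gen_set \<sigma> A X = dom A"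
proof -
  assume "fin_gen \<sigma> A"
  then obtain X where w: "wf_struc \<sigma> A" and X: "finite X" "X \<subseteq> dom A"
    and P: "\<forall>B. substr \<sigma> B A \<and> X \<subseteq> dom B \<longrightarrow> dom B = dom A" unfolding fin_gen_def by blast
  have "dom (gen_struc \<sigma> A X) = dom A" using P substr_gen_struc[OF w X(2)] gen_set_superset[of X \<sigma> A] by (metis gen_struc_simps(1))
  thus ?thesis using X by auto
qed

section \<open>Homomorphisms and embeddings\<close>

lemma subset_image_map: "set ys \<subseteq> h ` G \<Longrightarrow> \<exists>xs. set xs \<subseteq> G \<and> ys = map h xs"
proof (induct ys)
  case Nil then show ?case by auto
next
  case (Cons y ys)
  then obtain xs where "set xs \<subseteq> G" "ys = map h xs" by auto
  moreover obtain x where "x \<in> G" "y = h x" using Cons.prems by auto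
  ultimately show ?case by (intro exI[of _ "x#xs"]) auto
qed

lemma wf_fn: "wf_struc \<sigma> A \<Longrightarrow> set xs \<subseteq> dom A \<Longrightarrow> length xs = snd \<sigma> F \<Longrightarrow> fn A F xs \<in> dom A"
  unfolding wf_struc_def by blast

lemma wf_rel: "wf_struc \<sigma> A \<Longrightarrow> rel A R xs \<Longrightarrow> set xs \<subseteq> dom A \<and> length xs = fst \<sigma> R"
  unfolding wf_struc_def by blast

lemma homD: "hom \<sigma> f A B \<Longrightarrow> x \<in> dom A \<Longrightarrow> f x \<in> dom B"
  "hom \<sigma> f A B \<Longrightarrow> set xs \<subseteq> dom A \<Longrightarrow> length xs = snd \<sigma> F \<Longrightarrow> f (fn A F xs) = fn B F (map f xs)"
  "hom \<sigma> f A B \<Longrightarrow> set xs \<subseteq> dom A \<Longrightarrow> length xs = fst \<sigma> R \<Longrightarrow> rel A R xs \<Longrightarrow> rel B R (map f xs)"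
  unfolding hom_def by blast+

lemma embD: "emb \<sigma> f A B \<Longrightarrow> hom \<sigma> f A B" "emb \<sigma> f A B \<Longrightarrow> inj_on f (dom A)"
  "emb \<sigma> f A B \<Longrightarrow> set xs \<subseteq> dom A \<Longrightarrow> length xs = fst \<sigma> R \<Longrightarrow> rel B R (map f xs) \<Longrightarrow> rel A R xs"
  unfolding emb_def by blast+

lemma homI:
  assumes "\<And>x. x \<in> dom A \<Longrightarrow> f x \<in> dom B"
    "\<And>F xs. set xs \<subseteq> dom A \<Longrightarrow> length xs = snd \<sigma> F \<Longrightarrow> f (fn A F xs) = fn B F (map f xs)"
    "\<And>R xs. set xs \<subseteq> dom A \<Longrightarrow> length xs = fst \<sigma> R \<Longrightarrow> rel A R xs \<Longrightarrow> rel B R (map f xs)"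
  shows "hom \<sigma> f A B"
  unfolding hom_def using assms by blast

lemma embI:
  assumes "hom \<sigma> f A B" "inj_on f (dom A)"
    "\<And>R xs. set xs \<subseteq> dom A \<Longrightarrow> length xs = fst \<sigma> R \<Longrightarrow> rel B R (map f xs) \<Longrightarrow> rel A R xs"
  shows "emb \<sigma> f A B"
  unfolding emb_def using assms by blast

lemma hom_comp: "hom \<sigma> f A B \<Longrightarrow> hom \<sigma> g B C \<Longrightarrow> hom \<sigma> (\<lambda>x. g (f x)) A C"
proof (rule homI)
  assume f: "hom \<sigma> f A B" and g: "hom \<sigma> g B C"
  show "x \<in> dom A \<Longrightarrow> g (f x) \<in> dom C" for x using f g homD(1) by metis
  show "set xs \<subseteq> dom A \<Longrightarrow> length xs = snd \<sigma> F \<Longrightarrow> g (f (fn A F xs)) = fn C F (map (\<lambda>x. g (f x)) xs)" for xs F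
  proof -
    assume a: "set xs \<subseteq> dom A" "length xs = snd \<sigma> F"
    have "set (map f xs) \<subseteq> dom B" using a homD(1)[OF f] by auto
    thus ?thesis using a homD(2)[OF f a] homD(2)[OF g, of "map f xs" F] by (simp add: comp_def)
  qed
  show "set xs \<subseteq> dom A \<Longrightarrow> length xs = fst \<sigma> R \<Longrightarrow> rel A R xs \<Longrightarrow> rel C R (map (\<lambda>x. g (f x)) xs)" for xs R
  proof -
    assume a: "set xs \<subseteq> dom A" "length xs = fst \<sigma> R" "rel A R xs"
    have "set (map f xs) \<subseteq> dom B" using a homD(1)[OF f] by auto
    thus ?thesis using a homD(3)[OF f a] homD(3)[OF g, of "map f xs" R] by (simp add: comp_def)
  qed
qed

lemma emb_comp: "emb \<sigma> f A B \<Longrightarrow> emb \<sigma> g B C \<Longrightarrow> emb \<sigma> (\<lambda>x. g (f x)) A C"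
proof (rule embI)
  assume f: "emb \<sigma> f A B" and g: "emb \<sigma> g B C"
  show "hom \<sigma> (\<lambda>x. g (f x)) A C" using hom_comp embD(1) f g by blast
  show "inj_on (\<lambda>x. g (f x)) (dom A)"
  proof (rule inj_onI)
    fix x y assume "x \<in> dom A" "y \<in> dom A" "g (f x) = g (f y)"
    moreover have "f x \<in> dom B" "f y \<in> dom B" using calculation homD(1)[OF embD(1)[OF f]] by auto
    ultimately show "x = y" using embD(2)[OF f] embD(2)[OF g] by (auto dest: inj_onD)
  qed
  show "set xs \<subseteq> dom A \<Longrightarrow> length xs = fst \<sigma> R \<Longrightarrow> rel C R (map (\<lambda>x. g (f x)) xs) \<Longrightarrow> rel A R xs" for xs R
  proof -
    assume a: "set xs \<subseteq> dom A" "length xs = fst \<sigma> R" "rel C R (map (\<lambda>x. g (f x)) xs)"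
    have "set (map f xs) \<subseteq> dom B" using a homD(1)[OF embD(1)[OF f]] by auto
    hence "rel B R (map f xs)" using a embD(3)[OF g, of "map f xs" R] by (simp add: comp_def)
    thus ?thesis using embD(3)[OF f a(1,2)] by simp
  qed
qed

lemma emb_id_substr: "substr \<sigma> B A \<Longrightarrow> emb \<sigma> (\<lambda>x. x) B A"
  unfolding substr_def by blast

lemma emb_into_superstr: "emb \<sigma> f A M \<Longrightarrow> substr \<sigma> M U \<Longrightarrow> emb \<sigma> f A U"
proof -
  assume a: "emb \<sigma> f A M" "substr \<sigma> M U"
  have "emb \<sigma> (\<lambda>x. (\<lambda>y. y) (f x)) A U" by (rule emb_comp[OF a(1) emb_id_substr[OF a(2)]])
  thus ?thesis by simp
qed

lemma hom_restrict_substr: "substr \<sigma> B A \<Longrightarrow> hom \<sigma> f A C \<Longrightarrow> hom \<sigma> f B C"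
proof -
  assume a: "substr \<sigma> B A" "hom \<sigma> f A C"
  have "hom \<sigma> (\<lambda>x. f ((\<lambda>y. y) x)) B C" by (rule hom_comp[OF embD(1)[OF emb_id_substr[OF a(1)]] a(2)])
  thus ?thesis by simp
qed

lemma emb_restrict_substr: "substr \<sigma> B A \<Longrightarrow> emb \<sigma> f A C \<Longrightarrow> emb \<sigma> f B C"
proof -
  assume a: "substr \<sigma> B A" "emb \<sigma> f A C"
  have "emb \<sigma> (\<lambda>x. f ((\<lambda>y. y) x)) B C" by (rule emb_comp[OF emb_id_substr[OF a(1)] a(2)])
  thus ?thesis by simp
qed

lemma emb_into_substr:
  assumes e: "emb \<sigma> f A U" and M: "substr \<sigma> M U" and im: "f ` dom A \<subseteq> dom M"
    and w: "wf_struc \<sigma> A"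
  shows "emb \<sigma> f A M"
proof (rule embI)
  show "hom \<sigma> f A M"
  proof (rule homI)
    show "x \<in> dom A \<Longrightarrow> f x \<in> dom M" for x using im by auto
    show "set xs \<subseteq> dom A \<Longrightarrow> length xs = snd \<sigma> F \<Longrightarrow> f (fn A F xs) = fn M F (map f xs)" for xs F
    proof -
      assume a: "set xs \<subseteq> dom A" "length xs = snd \<sigma> F"
      have "set (map f xs) \<subseteq> dom M" using a im by auto
      thus ?thesis using homD(2)[OF embD(1)[OF e] a] substr_fn[OF M, of "map f xs" F] a by simp
    qed
    show "set xs \<subseteq> dom A \<Longrightarrow> length xs = fst \<sigma> R \<Longrightarrow> rel A R xs \<Longrightarrow> rel M R (map f xs)" for xs R
    proof -
      assume a: "set xs \<subseteq> dom A" "length xs = fst \<sigma> R" "rel A R xs"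
      have "set (map f xs) \<subseteq> dom M" using a im by auto
      thus ?thesis using homD(3)[OF embD(1)[OF e] a] substr_rel[OF M, of "map f xs" R] a by simp
    qed
  qed
  show "inj_on f (dom A)" using embD(2)[OF e] .
  show "set xs \<subseteq> dom A \<Longrightarrow> length xs = fst \<sigma> R \<Longrightarrow> rel M R (map f xs) \<Longrightarrow> rel A R xs" for xs R
  proof -
    assume a: "set xs \<subseteq> dom A" "length xs = fst \<sigma> R" "rel M R (map f xs)"
    have "set (map f xs) \<subseteq> dom M" using a im by auto
    thus ?thesis using embD(3)[OF e a(1,2)] substr_rel[OF M, of "map f xs" R] a by simp
  qed
qed

lemma emb_inv_into_restrict:
  assumes e: "emb \<sigma> e B C" and w: "wf_struc \<sigma> B" and S: "S \<subseteq> e ` dom B"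
  shows "emb \<sigma> (inv_into (dom B) e) (restrict_struc C S) B"
proof -
  let ?i = "inv_into (dom B) e"
  have inj: "inj_on e (dom B)" using embD(2)[OF e] .
  have mp: "set zs \<subseteq> S \<Longrightarrow> set (map ?i zs) \<subseteq> dom B \<and> map e (map ?i zs) = zs" for zs
    using S by (induct zs) (auto simp: inv_into_into f_inv_into_f)
  show ?thesis
  proof (rule embI)
    show "hom \<sigma> ?i (restrict_struc C S) B"
    proof (rule homI)
      show "x \<in> dom (restrict_struc C S) \<Longrightarrow> ?i x \<in> dom B" for x using S by (auto simp: inv_into_into)
      show "set xs \<subseteq> dom (restrict_struc C S) \<Longrightarrow> length xs = snd \<sigma> F \<Longrightarrow>
          ?i (fn (restrict_struc C S) F xs) = fn B F (map ?i xs)" for xs F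
      proof -
        assume a: "set xs \<subseteq> dom (restrict_struc C S)" "length xs = snd \<sigma> F"
        have m: "set (map ?i xs) \<subseteq> dom B" "map e (map ?i xs) = xs" using mp a by auto
        have "fn C F xs = e (fn B F (map ?i xs))" using homD(2)[OF embD(1)[OF e] m(1)] a m(2) by simp
        moreover have "fn B F (map ?i xs) \<in> dom B" using wf_fn[OF w m(1)] a by simp
        ultimately show ?thesis using inj by simp
      qed
      show "set xs \<subseteq> dom (restrict_struc C S) \<Longrightarrow> length xs = fst \<sigma> R \<Longrightarrow> rel (restrict_struc C S) R xs \<Longrightarrow>
          rel B R (map ?i xs)" for xs R
      proof -
        assume a: "set xs \<subseteq> dom (restrict_struc C S)" "length xs = fst \<sigma> R" "rel (restrict_struc C S) R xs"
        have m: "set (map ?i xs) \<subseteq> dom B" "map e (map ?i xs) = xs" using mp a by auto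
        show ?thesis using embD(3)[OF e m(1)] a m by simp
      qed
    qed
    show "inj_on ?i (dom (restrict_struc C S))" using S by (simp add: inj_on_inv_into)
    show "set xs \<subseteq> dom (restrict_struc C S) \<Longrightarrow> length xs = fst \<sigma> R \<Longrightarrow> rel B R (map ?i xs) \<Longrightarrow>
        rel (restrict_struc C S) R xs" for xs R
    proof -
      assume a: "set xs \<subseteq> dom (restrict_struc C S)" "length xs = fst \<sigma> R" "rel B R (map ?i xs)"
      have m: "set (map ?i xs) \<subseteq> dom B" "map e (map ?i xs) = xs" using mp a by auto
      show ?thesis using homD(3)[OF embD(1)[OF e] m(1)] a m by simp
    qed
  qed
qed

lemma iso_inv:
  assumes i: "iso \<sigma> f A B" and w: "wf_struc \<sigma> A" and wB: "wf_struc \<sigma> B"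
  shows "iso \<sigma> (inv_into (dom A) f) B A"
proof -
  have e: "emb \<sigma> f A B" and im: "f ` dom A = dom B" using i unfolding iso_def by auto
  have "emb \<sigma> (inv_into (dom A) f) (restrict_struc B (dom B)) A" using emb_inv_into_restrict[OF e w] im by simp
  moreover have "substr \<sigma> B (restrict_struc B (dom B))"
    unfolding substr_def emb_def hom_def using wB wf_restrict_struc[OF wB fn_closed_dom[OF wB]]
    by (auto simp: wf_struc_def)
  ultimately have "emb \<sigma> (inv_into (dom A) f) B A" using emb_restrict_substr by blast
  moreover have "inv_into (dom A) f ` dom B = dom A" using im embD(2)[OF e]
    by (metis inv_into_image_cancel order_refl)
  ultimately show ?thesis unfolding iso_def by blast
qed

lemma iso_id: "wf_struc \<sigma> A \<Longrightarrow> iso \<sigma> (\<lambda>x. x) A A"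
  unfolding iso_def emb_def hom_def by auto

lemma substr_refl: "wf_struc \<sigma> A \<Longrightarrow> substr \<sigma> A A"
  unfolding substr_def using iso_id iso_def by blast

lemma substr_trans: "substr \<sigma> A B \<Longrightarrow> substr \<sigma> B C \<Longrightarrow> substr \<sigma> A C"
  unfolding substr_def using emb_comp[of \<sigma> "\<lambda>x. x" A B "\<lambda>x. x" C] by auto

lemma hom_eq_on_gen_set:
  assumes w: "wf_struc \<sigma> A" and X: "X \<subseteq> dom A" and h1: "hom \<sigma> k1 A E" and h2: "hom \<sigma> k2 A E"
    and eq: "\<forall>x\<in>X. k1 x = k2 x"
  shows "\<forall>x\<in>gen_set \<sigma> A X. k1 x = k2 x"
proof -
  let ?S = "{x\<in>dom A. k1 x = k2 x}"
  have "fn_closed \<sigma> A ?S"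
    unfolding fn_closed_def
  proof (intro conjI allI impI)
    show "?S \<subseteq> dom A" by auto
    fix F xs assume a: "set xs \<subseteq> ?S \<and> length xs = snd \<sigma> F"
    have d: "set xs \<subseteq> dom A" using a by auto
    have m: "map k1 xs = map k2 xs" using a by (induct xs) auto
    show "fn A F xs \<in> ?S" using wf_fn[OF w d] a homD(2)[OF h1 d] homD(2)[OF h2 d] m by auto
  qed
  hence "gen_set \<sigma> A X \<subseteq> ?S" using gen_set_least X eq by blast
  thus ?thesis by auto
qed

lemma fn_closed_hom_image:
  assumes h: "hom \<sigma> f A B" and c: "fn_closed \<sigma> A G"
  shows "fn_closed \<sigma> B (f ` G)"
  unfolding fn_closed_def
proof (intro conjI allI impI)
  show "f ` G \<subseteq> dom B" using c homD(1)[OF h] unfolding fn_closed_def by auto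
  fix F ys assume a: "set ys \<subseteq> f ` G \<and> length ys = snd \<sigma> F"
  then obtain xs where xs: "set xs \<subseteq> G" "ys = map f xs" using subset_image_map by blast
  have d: "set xs \<subseteq> dom A" using xs c unfolding fn_closed_def by auto
  have "fn A F xs \<in> G" using c xs a unfolding fn_closed_def by auto
  moreover have "fn B F ys = f (fn A F xs)" using homD(2)[OF h d, of F] xs a by simp
  ultimately show "fn B F ys \<in> f ` G" by simp
qed

lemma hom_image_gen_set:
  assumes wA: "wf_struc \<sigma> A" and wB: "wf_struc \<sigma> B" and X: "X \<subseteq> dom A" and h: "hom \<sigma> f A B"
  shows "f ` gen_set \<sigma> A X = gen_set \<sigma> B (f ` X)"
proof
  have fX: "f ` X \<subseteq> dom B" using X homD(1)[OF h] by auto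
  let ?S = "{x\<in>dom A. f x \<in> gen_set \<sigma> B (f ` X)}"
  have "fn_closed \<sigma> A ?S"
    unfolding fn_closed_def
  proof (intro conjI allI impI)
    show "?S \<subseteq> dom A" by auto
    fix F xs assume a: "set xs \<subseteq> ?S \<and> length xs = snd \<sigma> F"
    have d: "set xs \<subseteq> dom A" using a by auto
    have "set (map f xs) \<subseteq> gen_set \<sigma> B (f ` X)" using a by auto
    hence "fn B F (map f xs) \<in> gen_set \<sigma> B (f ` X)" using gen_set_fn[OF wB fX] a by auto
    thus "fn A F xs \<in> ?S" using wf_fn[OF wA d] a homD(2)[OF h d] by auto
  qed
  moreover have "X \<subseteq> ?S"
  proof
    fix x assume "x \<in> X"
    moreover have "f ` X \<subseteq> gen_set \<sigma> B (f ` X)" by (rule gen_set_superset)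
    ultimately show "x \<in> ?S" using X by auto
  qed
  ultimately have "gen_set \<sigma> A X \<subseteq> ?S" using gen_set_least by blast
  thus "f ` gen_set \<sigma> A X \<subseteq> gen_set \<sigma> B (f ` X)" by auto
  have "fn_closed \<sigma> B (f ` gen_set \<sigma> A X)" using fn_closed_hom_image[OF h fn_closed_gen_set[OF wA X]] .
  thus "gen_set \<sigma> B (f ` X) \<subseteq> f ` gen_set \<sigma> A X" by (rule gen_set_least[OF _ image_mono[OF gen_set_superset]])
qed

lemma gen_set_substr:
  assumes s: "substr \<sigma> B A" and Y: "Y \<subseteq> dom B"
  shows "gen_set \<sigma> B Y = gen_set \<sigma> A Y"
proof
  have wA: "wf_struc \<sigma> A" and wB: "wf_struc \<sigma> B" using s unfolding substr_def by auto
  have "fn_closed \<sigma> A (gen_set \<sigma> B Y)"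
    using fn_closed_gen_set[OF wB Y] substr_fn[OF s] fn_closed_substr[OF s] unfolding fn_closed_def
    by (metis (no_types, lifting) subset_trans)
  thus "gen_set \<sigma> A Y \<subseteq> gen_set \<sigma> B Y" by (rule gen_set_least[OF _ gen_set_superset])
  have "fn_closed \<sigma> B (gen_set \<sigma> A Y)"
  proof -
    have "gen_set \<sigma> A Y \<subseteq> dom B" using gen_set_least[OF fn_closed_substr[OF s] Y] .
    thus ?thesis using fn_closed_gen_set[OF wA] Y s substr_fn[OF s] unfolding fn_closed_def substr_def
      by (metis (no_types, lifting) subset_trans)
  qed
  thus "gen_set \<sigma> B Y \<subseteq> gen_set \<sigma> A Y" by (rule gen_set_least[OF _ gen_set_superset])
qed

lemma substr_between: "substr \<sigma> B U \<Longrightarrow> substr \<sigma> M U \<Longrightarrow> dom B \<subseteq> dom M \<Longrightarrow> substr \<sigma> B M"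
proof -
  assume a: "substr \<sigma> B U" "substr \<sigma> M U" "dom B \<subseteq> dom M"
  have w: "wf_struc \<sigma> B" "wf_struc \<sigma> M" using a unfolding substr_def by auto
  have "emb \<sigma> (\<lambda>x. x) B M" using emb_into_substr[OF emb_id_substr[OF a(1)] a(2) _ w(1)] a(3) by simp
  thus ?thesis using w a(3) unfolding substr_def by blast
qed

section \<open>Ages\<close>

lemma age_fin_gen: "is_age \<sigma> K \<Longrightarrow> A \<in> K \<Longrightarrow> fin_gen \<sigma> A"
  unfolding is_age_def by blast

lemma age_wf: "is_age \<sigma> K \<Longrightarrow> A \<in> K \<Longrightarrow> wf_struc \<sigma> A"
  using age_fin_gen fin_gen_def by blast

lemma age_substr: "is_age \<sigma> K \<Longrightarrow> A \<in> K \<Longrightarrow> substr \<sigma> B A \<Longrightarrow> fin_gen \<sigma> B \<Longrightarrow> B \<in> K"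
proof -
  assume K: "is_age \<sigma> K" and A: "A \<in> K" and s: "substr \<sigma> B A" and f: "fin_gen \<sigma> B"
  have w: "wf_struc \<sigma> B" using f fin_gen_def by blast
  have "isomorphic \<sigma> B B" using iso_id[OF w] isomorphic_def by blast
  thus ?thesis using K A s f w unfolding is_age_def by blast
qed

lemma age_iso: "is_age \<sigma> K \<Longrightarrow> A \<in> K \<Longrightarrow> wf_struc \<sigma> B \<Longrightarrow> iso \<sigma> f B A \<Longrightarrow> B \<in> K"
proof -
  assume K: "is_age \<sigma> K" and A: "A \<in> K" and w: "wf_struc \<sigma> B" and i: "iso \<sigma> f B A"
  have "substr \<sigma> A A" using substr_refl age_wf[OF K A] by blast
  moreover have "isomorphic \<sigma> B A" using i isomorphic_def by blast
  ultimately show ?thesis using K A w age_fin_gen[OF K A] unfolding is_age_def by blast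
qed

lemma cl_wf: "U \<in> cl \<sigma> K \<Longrightarrow> wf_struc \<sigma> U"
  unfolding cl_def by blast

lemma cl_substr_in_age: "is_age \<sigma> K \<Longrightarrow> U \<in> cl \<sigma> K \<Longrightarrow> substr \<sigma> B U \<Longrightarrow> fin_gen \<sigma> B \<Longrightarrow> B \<in> K"
proof -
  assume K: "is_age \<sigma> K" and U: "U \<in> cl \<sigma> K" and s: "substr \<sigma> B U" and f: "fin_gen \<sigma> B"
  obtain C h where C: "C \<in> K" "iso \<sigma> h B C" using U s f unfolding cl_def isomorphic_def by blast
  show ?thesis using age_iso[OF K C(1) _ C(2)] f fin_gen_def by blast
qed

lemma age_subset_cl: "is_age \<sigma> K \<Longrightarrow> A \<in> K \<Longrightarrow> A \<in> cl \<sigma> K"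
proof -
  assume K: "is_age \<sigma> K" and A: "A \<in> K"
  { fix B assume "substr \<sigma> B A" "fin_gen \<sigma> B"
    hence "B \<in> K" using age_substr[OF K A] by blast
    moreover have "isomorphic \<sigma> B B" using iso_id \<open>fin_gen \<sigma> B\<close> fin_gen_def isomorphic_def by blast
    ultimately have "\<exists>C\<in>K. isomorphic \<sigma> B C" by blast }
  thus ?thesis unfolding cl_def using age_wf[OF K A] by blast
qed

lemma gen_struc_in_age: "is_age \<sigma> K \<Longrightarrow> U \<in> cl \<sigma> K \<Longrightarrow> finite X \<Longrightarrow> X \<subseteq> dom U \<Longrightarrow> gen_struc \<sigma> U X \<in> K"
  using cl_substr_in_age substr_gen_struc fin_gen_gen_struc cl_wf by blast

lemma age_generating_list: "is_age \<sigma> K \<Longrightarrow> A \<in> K \<Longrightarrow> \<exists>xs. set xs \<subseteq> dom A \<and> gen_set \<sigma> A (set xs) = dom A"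
  using age_fin_gen fin_gen_generators finite_list by metis

text \<open>By joint embedding both embed into some \<open>D\<close>, and each image is the substructure of \<open>D\<close>
  generated by the empty set.\<close>

lemma gen_struc_empty_iso:
  assumes K: "is_age \<sigma> K" and wA: "wf_struc \<sigma> A" and wB: "wf_struc \<sigma> B"
    and GA: "gen_struc \<sigma> A {} \<in> K" and GB: "gen_struc \<sigma> B {} \<in> K"
  shows "\<exists>f. iso \<sigma> f (gen_struc \<sigma> A {}) (gen_struc \<sigma> B {})"
proof -
  obtain D a b where D: "D \<in> K" "emb \<sigma> a (gen_struc \<sigma> A {}) D" "emb \<sigma> b (gen_struc \<sigma> B {}) D"
    using K GA GB unfolding is_age_def by blast
  have wD: "wf_struc \<sigma> D" using age_wf[OF K D(1)] .
  have wGA: "wf_struc \<sigma> (gen_struc \<sigma> A {})" using wf_gen_struc[OF wA] by simp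
  have wGB: "wf_struc \<sigma> (gen_struc \<sigma> B {})" using wf_gen_struc[OF wB] by simp
  have eA: "gen_set \<sigma> (gen_struc \<sigma> A {}) {} = gen_set \<sigma> A {}"
    using gen_set_substr[OF substr_gen_struc[OF wA]] by simp
  have eB: "gen_set \<sigma> (gen_struc \<sigma> B {}) {} = gen_set \<sigma> B {}"
    using gen_set_substr[OF substr_gen_struc[OF wB]] by simp
  have ia: "a ` gen_set \<sigma> A {} = gen_set \<sigma> D {}"
    using hom_image_gen_set[OF wGA wD _ embD(1)[OF D(2)], of "{}"] eA by simp
  have ib: "b ` gen_set \<sigma> B {} = gen_set \<sigma> D {}"
    using hom_image_gen_set[OF wGB wD _ embD(1)[OF D(3)], of "{}"] eB by simp
  let ?S = "gen_set \<sigma> D {}"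
  have cS: "fn_closed \<sigma> D ?S" using fn_closed_gen_set[OF wD] by simp
  have a1: "emb \<sigma> a (gen_struc \<sigma> A {}) (restrict_struc D ?S)"
    using emb_into_substr[OF D(2) substr_restrict_struc[OF wD cS] _ wGA] ia by simp
  have b1: "emb \<sigma> (inv_into (gen_set \<sigma> B {}) b) (restrict_struc D ?S) (gen_struc \<sigma> B {})"
    using emb_inv_into_restrict[OF D(3) wGB] ib by simp
  have "emb \<sigma> (\<lambda>x. inv_into (gen_set \<sigma> B {}) b (a x)) (gen_struc \<sigma> A {}) (gen_struc \<sigma> B {})"
    using emb_comp[OF a1 b1] .
  moreover have "(\<lambda>x. inv_into (gen_set \<sigma> B {}) b (a x)) ` gen_set \<sigma> A {} = gen_set \<sigma> B {}"
  proof -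
    have "(\<lambda>x. inv_into (gen_set \<sigma> B {}) b (a x)) ` gen_set \<sigma> A {} = inv_into (gen_set \<sigma> B {}) b ` ?S"
      using ia by (metis image_image)
    also have "\<dots> = gen_set \<sigma> B {}" using ib embD(2)[OF D(3)]
      by (metis gen_struc_simps(1) inv_into_image_cancel order_refl)
    finally show ?thesis .
  qed
  ultimately show ?thesis unfolding iso_def by auto
qed

section \<open>Unions of chains\<close>

lemma finite_subset_mono_Union:
  fixes G :: "nat \<Rightarrow> 'a set"
  assumes "mono G" and "finite S" and "S \<subseteq> (\<Union>n. G n)"
  shows "\<exists>n. S \<subseteq> G n"
proof -
  obtain n where n: "S \<subseteq> (\<Union>i<n. G i)" using finite_countable_subset[OF assms(2,3)] .
  have "G i \<subseteq> G n" if "i < n" for i using monoD[OF assms(1)] that by simp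
  then show ?thesis using n by blast
qed

definition glue :: "(nat \<Rightarrow> 'a set) \<Rightarrow> (nat \<Rightarrow> 'a \<Rightarrow> 'b) \<Rightarrow> 'a \<Rightarrow> 'b" where
  "glue G h x = h (LEAST n. x \<in> G n) x"

lemma glue_eq:
  assumes mono: "mono G" and agree: "\<And>n. \<forall>x\<in>G n. h (Suc n) x = h n x" and x: "x \<in> G n"
  shows "glue G h x = h n x"
proof -
  have stable: "h m x = h k x" if "k \<le> m" "x \<in> G k" for k m
    using that(1)
  proof (induction m rule: dec_induct)
    case (step m)
    have "x \<in> G m" using monoD[OF mono step(1)] that(2) by blast
    then show ?case using agree[of m] step(3) by simp
  qed simp
  let ?k = "LEAST n. x \<in> G n"
  have "?k \<le> n" by (rule Least_le) (rule x)
  moreover have "x \<in> G ?k" by (rule LeastI) (rule x)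
  ultimately show ?thesis unfolding glue_def using stable by simp
qed

definition exhausting_chain :: "('r,'f) sig \<Rightarrow> (nat \<Rightarrow> ('r,'f) struc) \<Rightarrow> ('r,'f) struc \<Rightarrow> bool" where
  "exhausting_chain \<sigma> N U \<longleftrightarrow> wf_struc \<sigma> U \<and> (\<forall>n. substr \<sigma> (N n) U) \<and>
     mono (\<lambda>n. dom (N n)) \<and> dom U = (\<Union>n. dom (N n))"

lemma exhausting_chain_finite:
  assumes "exhausting_chain \<sigma> N U" and "finite X" and "X \<subseteq> dom U"
  shows "\<exists>n. X \<subseteq> dom (N n)"
  using finite_subset_mono_Union[of "\<lambda>n. dom (N n)" X] assms unfolding exhausting_chain_def by blast

lemma exhausting_chain_list:
  "exhausting_chain \<sigma> N U \<Longrightarrow> set xs \<subseteq> dom U \<Longrightarrow> \<exists>n. set xs \<subseteq> dom (N n)"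
  using exhausting_chain_finite by blast

lemma hom_glue:
  assumes N: "exhausting_chain \<sigma> N U" and h: "\<And>n. hom \<sigma> (h n) (N n) E"
    and agree: "\<And>n. \<forall>x\<in>dom (N n). h (Suc n) x = h n x"
  shows "hom \<sigma> (glue (\<lambda>n. dom (N n)) h) U E"
proof -
  let ?H = "glue (\<lambda>n. dom (N n)) h"
  have mono: "mono (\<lambda>n. dom (N n))" and sub: "\<And>n. substr \<sigma> (N n) U"
    using N unfolding exhausting_chain_def by auto
  have H: "x \<in> dom (N n) \<Longrightarrow> ?H x = h n x" for x n using glue_eq[OF mono agree] .
  have mapH: "set xs \<subseteq> dom (N n) \<Longrightarrow> map ?H xs = map (h n) xs" for xs n
    using H by (induct xs) auto
  show ?thesis
  proof (rule homI)
    fix x assume "x \<in> dom U"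
    then obtain n where "x \<in> dom (N n)" using N unfolding exhausting_chain_def by blast
    then show "?H x \<in> dom E" using H homD(1)[OF h] by metis
  next
    fix xs F assume a: "set xs \<subseteq> dom U" "length xs = snd \<sigma> F"
    obtain n where n: "set xs \<subseteq> dom (N n)" using exhausting_chain_list[OF N a(1)] by blast
    have "fn U F xs = fn (N n) F xs" using substr_fn[OF sub n a(2)] .
    moreover have "fn (N n) F xs \<in> dom (N n)" using wf_fn[OF _ n a(2)] sub unfolding substr_def by blast
    ultimately have "?H (fn U F xs) = h n (fn (N n) F xs)" using H by simp
    also have "\<dots> = fn E F (map (h n) xs)" using homD(2)[OF h n a(2)] .
    also have "map (h n) xs = map ?H xs" using mapH[OF n] by simp
    finally show "?H (fn U F xs) = fn E F (map ?H xs)" .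
  next
    fix xs R assume a: "set xs \<subseteq> dom U" "length xs = fst \<sigma> R" "rel U R xs"
    obtain n where n: "set xs \<subseteq> dom (N n)" using exhausting_chain_list[OF N a(1)] by blast
    show "rel E R (map ?H xs)"
      unfolding mapH[OF n] using homD(3)[OF h n a(2)] substr_rel[OF sub n] a(3) by simp
  qed
qed

lemma emb_glue:
  assumes N: "exhausting_chain \<sigma> N U" and h: "\<And>n. emb \<sigma> (h n) (N n) E"
    and agree: "\<And>n. \<forall>x\<in>dom (N n). h (Suc n) x = h n x"
  shows "emb \<sigma> (glue (\<lambda>n. dom (N n)) h) U E"
proof -
  let ?H = "glue (\<lambda>n. dom (N n)) h"
  have mono: "mono (\<lambda>n. dom (N n))" and sub: "\<And>n. substr \<sigma> (N n) U"
    using N unfolding exhausting_chain_def by auto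
  have H: "x \<in> dom (N n) \<Longrightarrow> ?H x = h n x" for x n using glue_eq[OF mono agree] .
  have mapH: "set xs \<subseteq> dom (N n) \<Longrightarrow> map ?H xs = map (h n) xs" for xs n
    using H by (induct xs) auto
  show ?thesis
  proof (rule embI)
    show "hom \<sigma> ?H U E" using hom_glue[OF N embD(1)[OF h] agree] .
    show "inj_on ?H (dom U)"
    proof (rule inj_onI)
      fix x y assume xy: "x \<in> dom U" "y \<in> dom U" "?H x = ?H y"
      obtain n where n: "set [x, y] \<subseteq> dom (N n)" using exhausting_chain_list[OF N, of "[x, y]"] xy by auto
      then show "x = y" using xy H embD(2)[OF h[of n]] by (auto dest: inj_onD)
    qed
  next
    fix xs R assume a: "set xs \<subseteq> dom U" "length xs = fst \<sigma> R" "rel E R (map ?H xs)"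
    obtain n where n: "set xs \<subseteq> dom (N n)" using exhausting_chain_list[OF N a(1)] by blast
    show "rel U R xs" using embD(3)[OF h n a(2)] substr_rel[OF sub n] a(3) unfolding mapH[OF n] by simp
  qed
qed

lemma fin_gen_hom_image_in_chain:
  assumes N: "exhausting_chain \<sigma> N U" and A: "fin_gen \<sigma> A" and a: "hom \<sigma> a A U"
  shows "\<exists>n. a ` dom A \<subseteq> dom (N n)"
proof -
  obtain X where X: "finite X" "X \<subseteq> dom A" "gen_set \<sigma> A X = dom A"
    using fin_gen_generators[OF A] by blast
  have wU: "wf_struc \<sigma> U" and sub: "\<And>n. substr \<sigma> (N n) U"
    using N unfolding exhausting_chain_def by auto
  have aX: "a ` X \<subseteq> dom U" using X(2) homD(1)[OF a] by auto
  obtain n where n: "a ` X \<subseteq> dom (N n)" using exhausting_chain_finite[OF N _ aX] X(1) by blast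
  have "a ` dom A = gen_set \<sigma> U (a ` X)"
    using hom_image_gen_set[OF _ wU X(2) a] A X(3) unfolding fin_gen_def by simp
  also have "\<dots> \<subseteq> dom (N n)" using gen_set_least[OF fn_closed_substr[OF sub] n] .
  finally show ?thesis ..
qed

lemma exhausting_chain_cl:
  assumes K: "is_age \<sigma> K" and N: "exhausting_chain \<sigma> N U" and NK: "\<And>n. N n \<in> cl \<sigma> K"
  shows "U \<in> cl \<sigma> K"
  unfolding cl_def
proof (intro CollectI conjI allI impI)
  show wU: "wf_struc \<sigma> U" using N unfolding exhausting_chain_def by blast
  fix B assume "substr \<sigma> B U \<and> fin_gen \<sigma> B"
  then have B: "substr \<sigma> B U" "fin_gen \<sigma> B" by auto
  obtain n where "(\<lambda>x. x) ` dom B \<subseteq> dom (N n)"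
    using fin_gen_hom_image_in_chain[OF N B(2) embD(1)[OF emb_id_substr[OF B(1)]]] by blast
  then have "substr \<sigma> B (N n)" using substr_between[OF B(1)] N unfolding exhausting_chain_def by auto
  then have "B \<in> K" using cl_substr_in_age[OF K NK _ B(2)] by blast
  moreover have "isomorphic \<sigma> B B" using iso_id B(2) unfolding fin_gen_def isomorphic_def by blast
  ultimately show "\<exists>C\<in>K. isomorphic \<sigma> B C" by blast
qed

definition chain_union :: "('r,'f) sig \<Rightarrow> (nat \<Rightarrow> ('r,'f) struc) \<Rightarrow> ('r,'f) struc" where
  "chain_union \<sigma> M = \<lparr>dom = (\<Union>n. dom (M n)), rel = (\<lambda>R xs. \<exists>n. rel (M n) R xs),
     fn = (\<lambda>F. glue (\<lambda>n. {xs. set xs \<subseteq> dom (M n) \<and> length xs = snd \<sigma> F}) (\<lambda>n. fn (M n) F))\<rparr>"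

lemma chain_substr_mono:
  assumes chain: "\<And>n. substr \<sigma> (M n) (M (Suc n))" and "n \<le> k"
  shows "substr \<sigma> (M n) (M k)"
  using \<open>n \<le> k\<close>
proof (induction k rule: dec_induct)
  case base
  then show ?case using substr_refl chain unfolding substr_def by blast
next
  case (step k)
  then show ?case using substr_trans chain by blast
qed

lemma chain_dom_mono:
  assumes chain: "\<And>n. substr \<sigma> (M n) (M (Suc n))"
  shows "mono (\<lambda>n. dom (M n))"
proof (rule monoI)
  show "dom (M n) \<le> dom (M k)" if "n \<le> k" for n k
    using chain_substr_mono[of \<sigma> M, OF chain that] unfolding substr_def by blast
qed

lemma chain_union_fn:
  assumes chain: "\<And>n. substr \<sigma> (M n) (M (Suc n))" and xs: "set xs \<subseteq> dom (M k)" "length xs = snd \<sigma> F"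
  shows "fn (chain_union \<sigma> M) F xs = fn (M k) F xs"
proof -
  let ?G = "\<lambda>n. {xs. set xs \<subseteq> dom (M n) \<and> length xs = snd \<sigma> F}"
  have "mono ?G"
  proof (rule monoI)
    show "?G n \<le> ?G k" if "n \<le> k" for n k using monoD[OF chain_dom_mono[of \<sigma> M, OF chain] that] by auto
  qed
  moreover have "\<forall>xs\<in>?G n. fn (M (Suc n)) F xs = fn (M n) F xs" for n
    using substr_fn[OF chain] by auto
  ultimately have "glue ?G (\<lambda>n. fn (M n) F) xs = fn (M k) F xs" by (rule glue_eq) (use xs in simp)
  then show ?thesis unfolding chain_union_def by simp
qed

lemma chain_union_rel:
  assumes chain: "\<And>n. substr \<sigma> (M n) (M (Suc n))" and xs: "set xs \<subseteq> dom (M k)"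
  shows "rel (chain_union \<sigma> M) R xs = rel (M k) R xs"
proof
  have sub: "n \<le> k \<Longrightarrow> substr \<sigma> (M n) (M k)" for n k
    using chain_substr_mono[of \<sigma> M, OF chain] by blast
  assume "rel (chain_union \<sigma> M) R xs"
  then obtain n where n: "rel (M n) R xs" unfolding chain_union_def by auto
  have "set xs \<subseteq> dom (M n)" using wf_rel[OF _ n] chain unfolding substr_def by blast
  then have "rel (M (max n k)) R xs" using substr_rel[OF sub[of n "max n k"]] n by simp
  then show "rel (M k) R xs" using substr_rel[OF sub[of k "max n k"] xs] by simp
qed (auto simp: chain_union_def)

lemma exhausting_chain_union:
  assumes chain: "\<And>n. substr \<sigma> (M n) (M (Suc n))"
  shows "exhausting_chain \<sigma> M (chain_union \<sigma> M)"
proof -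
  let ?V = "chain_union \<sigma> M"
  have wM: "wf_struc \<sigma> (M n)" for n using chain unfolding substr_def by blast
  have mono: "mono (\<lambda>n. dom (M n))" using chain_dom_mono[of \<sigma> M, OF chain] .
  have domV: "dom ?V = (\<Union>n. dom (M n))" unfolding chain_union_def by simp
  have wV: "wf_struc \<sigma> ?V"
    unfolding wf_struc_def
  proof (intro conjI allI impI)
    fix F xs assume a: "set xs \<subseteq> dom ?V \<and> length xs = snd \<sigma> F"
    then obtain n where n: "set xs \<subseteq> dom (M n)" using finite_subset_mono_Union[OF mono, of "set xs"] domV by auto
    show "fn ?V F xs \<in> dom ?V" using wf_fn[OF wM n] a chain_union_fn[of \<sigma> M, OF chain n] domV by auto
  next
    fix R xs assume "rel ?V R xs"
    then obtain n where "rel (M n) R xs" unfolding chain_union_def by auto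
    then have "set xs \<subseteq> dom (M n)" "length xs = fst \<sigma> R" using wf_rel[OF wM] by auto
    then show "set xs \<subseteq> dom ?V" "length xs = fst \<sigma> R" using domV by auto
  qed
  have "substr \<sigma> (M k) ?V" for k
  proof -
    have d: "dom (M k) \<subseteq> dom ?V" using domV by auto
    have "hom \<sigma> (\<lambda>x. x) (M k) ?V"
      by (rule homI) (use d chain_union_fn[of \<sigma> M, OF chain] chain_union_rel[of \<sigma> M, OF chain] in auto)
    then have "emb \<sigma> (\<lambda>x. x) (M k) ?V"
      by (rule embI) (use chain_union_rel[of \<sigma> M, OF chain] in simp_all)
    then show ?thesis using wM wV d unfolding substr_def by blast
  qed
  then show ?thesis using wV mono domV unfolding exhausting_chain_def by blast
qed
section \<open>The extension property\<close>

definition extends_along :: "('r,'f) sig \<Rightarrow> ('r,'f) struc \<Rightarrow> (nat \<Rightarrow> nat) \<Rightarrow> ('r,'f) struc \<Rightarrow> ('r,'f) struc \<Rightarrow>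
    (nat \<Rightarrow> nat) \<Rightarrow> (nat \<Rightarrow> nat) \<Rightarrow> (nat \<Rightarrow> nat) \<Rightarrow> bool" where
  "extends_along \<sigma> U u A B a f g \<longleftrightarrow>
     (\<exists>e. emb \<sigma> e B U \<and> (\<forall>x\<in>dom A. e (f x) = a x) \<and> (\<forall>y\<in>dom B. u (e y) = g y))"

definition ext_prop :: "('r,'f) sig \<Rightarrow> ('r,'f) struc set \<Rightarrow> ('r,'f) struc \<Rightarrow> ('r,'f) struc \<Rightarrow> (nat \<Rightarrow> nat) \<Rightarrow> bool" where
  "ext_prop \<sigma> C T U u \<longleftrightarrow> (\<forall>A\<in>C. \<forall>B\<in>C. \<forall>a f g. emb \<sigma> a A U \<and> emb \<sigma> f A B \<and> hom \<sigma> g B T \<and>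
     (\<forall>x\<in>dom A. g (f x) = u (a x)) \<longrightarrow> extends_along \<sigma> U u A B a f g)"

lemma ext_propE:
  assumes "ext_prop \<sigma> C T U u" and "A \<in> C" "B \<in> C" and "emb \<sigma> a A U" "emb \<sigma> f A B" "hom \<sigma> g B T"
    and "\<forall>x\<in>dom A. g (f x) = u (a x)"
  obtains e where "emb \<sigma> e B U" "\<forall>x\<in>dom A. e (f x) = a x" "\<forall>y\<in>dom B. u (e y) = g y"
  using assms unfolding ext_prop_def extends_along_def by blast

lemma extends_along_iso:
  assumes A: "iso \<sigma> \<phi> A A'" "wf_struc \<sigma> A" and B: "iso \<sigma> \<psi> B B'" "wf_struc \<sigma> B"
    and E: "extends_along \<sigma> U u A' B' (\<lambda>x. a (inv_into (dom A) \<phi> x))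
      (\<lambda>x. \<psi> (f (inv_into (dom A) \<phi> x))) (\<lambda>y. g (inv_into (dom B) \<psi> y))"
  shows "extends_along \<sigma> U u A B a f g"
proof -
  obtain e where e: "emb \<sigma> e B' U" "\<forall>x\<in>dom A'. e (\<psi> (f (inv_into (dom A) \<phi> x))) = a (inv_into (dom A) \<phi> x)"
    "\<forall>y\<in>dom B'. u (e y) = g (inv_into (dom B) \<psi> y)"
    using E unfolding extends_along_def by blast
  have injA: "inj_on \<phi> (dom A)" and injB: "inj_on \<psi> (dom B)"
    and imA: "\<phi> ` dom A = dom A'" and imB: "\<psi> ` dom B = dom B'" and \<psi>: "emb \<sigma> \<psi> B B'"
    using A B unfolding iso_def emb_def by auto
  show ?thesis
    unfolding extends_along_def
  proof (intro exI[of _ "\<lambda>y. e (\<psi> y)"] conjI ballI)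
    show "emb \<sigma> (\<lambda>y. e (\<psi> y)) B U" using emb_comp[OF \<psi> e(1)] .
    show "e (\<psi> (f x)) = a x" if "x \<in> dom A" for x
    proof -
      have "\<phi> x \<in> dom A'" "inv_into (dom A) \<phi> (\<phi> x) = x" using imA injA that by auto
      then show ?thesis using e(2) by metis
    qed
    show "u (e (\<psi> y)) = g y" if "y \<in> dom B" for y
    proof -
      have "\<psi> y \<in> dom B'" "inv_into (dom B) \<psi> (\<psi> y) = y" using imB injB that by auto
      then show ?thesis using e(3) by metis
    qed
  qed
qed

lemma ext_prop_from_reps:
  assumes K: "is_age \<sigma> C" and SC: "S \<subseteq> C" and rep: "\<forall>A\<in>C. \<exists>B\<in>S. isomorphic \<sigma> A B"
    and ES: "\<And>A B a f g. A \<in> S \<Longrightarrow> B \<in> S \<Longrightarrow> emb \<sigma> a A U \<Longrightarrow> emb \<sigma> f A B \<Longrightarrow> hom \<sigma> g B T \<Longrightarrow>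
       \<forall>x\<in>dom A. g (f x) = u (a x) \<Longrightarrow> extends_along \<sigma> U u A B a f g"
  shows "ext_prop \<sigma> C T U u"
  unfolding ext_prop_def
proof (intro ballI allI impI)
  fix A B a f g
  assume A: "A \<in> C" and B: "B \<in> C"
    and asm: "emb \<sigma> a A U \<and> emb \<sigma> f A B \<and> hom \<sigma> g B T \<and> (\<forall>x\<in>dom A. g (f x) = u (a x))"
  then have ea: "emb \<sigma> a A U" and ef: "emb \<sigma> f A B" and hg: "hom \<sigma> g B T"
    and c: "\<forall>x\<in>dom A. g (f x) = u (a x)" by auto
  obtain A' \<phi> where A': "A' \<in> S" "iso \<sigma> \<phi> A A'" using rep A unfolding isomorphic_def by blast
  obtain B' \<psi> where B': "B' \<in> S" "iso \<sigma> \<psi> B B'" using rep B unfolding isomorphic_def by blast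
  have wA: "wf_struc \<sigma> A" "wf_struc \<sigma> A'" and wB: "wf_struc \<sigma> B" "wf_struc \<sigma> B'"
    using age_wf[OF K] A A' B B' SC by auto
  let ?\<phi>i = "inv_into (dom A) \<phi>" and ?\<psi>i = "inv_into (dom B) \<psi>"
  have \<phi>i: "emb \<sigma> ?\<phi>i A' A" and \<psi>i: "emb \<sigma> ?\<psi>i B' B" and \<psi>: "emb \<sigma> \<psi> B B'"
    using iso_inv[OF A'(2) wA] iso_inv[OF B'(2) wB] B'(2) unfolding iso_def by auto
  have "\<forall>x\<in>dom A'. g (?\<psi>i (\<psi> (f (?\<phi>i x)))) = u (a (?\<phi>i x))"
  proof
    fix x assume "x \<in> dom A'"
    then have "?\<phi>i x \<in> dom A" using \<phi>i homD(1) embD(1) by metis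
    moreover from this have "f (?\<phi>i x) \<in> dom B" using homD(1)[OF embD(1)[OF ef]] by blast
    ultimately show "g (?\<psi>i (\<psi> (f (?\<phi>i x)))) = u (a (?\<phi>i x))"
      using c embD(2)[OF \<psi>] by simp
  qed
  then have "extends_along \<sigma> U u A' B' (\<lambda>x. a (?\<phi>i x)) (\<lambda>x. \<psi> (f (?\<phi>i x))) (\<lambda>y. g (?\<psi>i y))"
    using ES[OF A'(1) B'(1) emb_comp[OF \<phi>i ea] emb_comp[OF emb_comp[OF \<phi>i ef] \<psi>]
      hom_comp[OF embD(1)[OF \<psi>i] hg]] by blast
  then show "extends_along \<sigma> U u A B a f g" using extends_along_iso[OF A'(2) wA(1) B'(2) wB(1)] by blast
qed

definition partial_emb :: "('r,'f) sig \<Rightarrow> ('r,'f) struc \<Rightarrow> ('r,'f) struc \<Rightarrow> (nat \<Rightarrow> nat) \<Rightarrow> (nat \<Rightarrow> nat) \<Rightarrow>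
   nat set \<Rightarrow> (nat \<Rightarrow> nat) \<Rightarrow> bool" where
  "partial_emb \<sigma> U1 U2 u1 u2 X h \<longleftrightarrow> finite X \<and> X \<subseteq> dom U1 \<and> emb \<sigma> h (gen_struc \<sigma> U1 X) U2 \<and>
     (\<forall>x\<in>gen_set \<sigma> U1 X. u2 (h x) = u1 x)"

lemma partial_emb_forth:
  assumes K: "is_age \<sigma> C" and E: "ext_prop \<sigma> C T U2 u2" and U1: "U1 \<in> cl \<sigma> C" and hu1: "hom \<sigma> u1 U1 T"
    and P: "partial_emb \<sigma> U1 U2 u1 u2 X h" and x0: "x0 \<in> dom U1"
  shows "\<exists>h'. partial_emb \<sigma> U1 U2 u1 u2 (insert x0 X) h' \<and> (\<forall>x\<in>gen_set \<sigma> U1 X. h' x = h x)"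
proof -
  have w: "wf_struc \<sigma> U1" using cl_wf[OF U1] .
  have X: "finite X" "X \<subseteq> dom U1" and eh: "emb \<sigma> h (gen_struc \<sigma> U1 X) U2"
    and c: "\<forall>x\<in>gen_set \<sigma> U1 X. u2 (h x) = u1 x" using P unfolding partial_emb_def by auto
  have X': "finite (insert x0 X)" "insert x0 X \<subseteq> dom U1" using X x0 by auto
  have A: "gen_struc \<sigma> U1 X \<in> C" using gen_struc_in_age[OF K U1 X] .
  have B: "gen_struc \<sigma> U1 (insert x0 X) \<in> C" using gen_struc_in_age[OF K U1 X'] .
  have sB: "substr \<sigma> (gen_struc \<sigma> U1 (insert x0 X)) U1" using substr_gen_struc[OF w X'(2)] .
  have f: "emb \<sigma> (\<lambda>x. x) (gen_struc \<sigma> U1 X) (gen_struc \<sigma> U1 (insert x0 X))"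
    using emb_into_substr[OF emb_id_substr[OF substr_gen_struc[OF w X(2)]] sB] gen_set_mono[OF w X'(2), of X]
      wf_gen_struc[OF w X(2)] by auto
  have g: "hom \<sigma> u1 (gen_struc \<sigma> U1 (insert x0 X)) T" using hom_restrict_substr[OF sB hu1] .
  obtain e where e: "emb \<sigma> e (gen_struc \<sigma> U1 (insert x0 X)) U2" "\<forall>x\<in>gen_set \<sigma> U1 X. e x = h x"
    "\<forall>y\<in>gen_set \<sigma> U1 (insert x0 X). u2 (e y) = u1 y"
    using ext_propE[OF E A B eh f g] c by auto
  show ?thesis using e X' unfolding partial_emb_def by blast
qed

lemma partial_emb_inverse:
  assumes sB: "substr \<sigma> B U2" and e: "emb \<sigma> e B U1" and ue: "\<forall>z\<in>dom B. u1 (e z) = u2 z"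
    and X: "finite X" "X \<subseteq> e ` dom B"
  shows "partial_emb \<sigma> U1 U2 u1 u2 X (inv_into (dom B) e)" and "gen_set \<sigma> U1 X \<subseteq> e ` dom B"
proof -
  have wB: "wf_struc \<sigma> B" using sB unfolding substr_def by blast
  have "fn_closed \<sigma> U1 (e ` dom B)" using fn_closed_hom_image[OF embD(1)[OF e] fn_closed_dom[OF wB]] .
  then show sub: "gen_set \<sigma> U1 X \<subseteq> e ` dom B" using gen_set_least X(2) by blast
  have "X \<subseteq> dom U1" using X(2) homD(1)[OF embD(1)[OF e]] by blast
  moreover have "emb \<sigma> (inv_into (dom B) e) (gen_struc \<sigma> U1 X) U2"
    using emb_into_superstr[OF emb_inv_into_restrict[OF e wB sub] sB] by (simp add: gen_struc_def)
  moreover have "u2 (inv_into (dom B) e z) = u1 z" if "z \<in> gen_set \<sigma> U1 X" for z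
  proof -
    have "z \<in> e ` dom B" using sub that by blast
    then show ?thesis using ue by (metis f_inv_into_f inv_into_into)
  qed
  ultimately show "partial_emb \<sigma> U1 U2 u1 u2 X (inv_into (dom B) e)"
    using X(1) unfolding partial_emb_def by blast
qed

lemma partial_emb_pullback:
  assumes K: "is_age \<sigma> C" and E: "ext_prop \<sigma> C T U1 u1" and U1: "U1 \<in> cl \<sigma> C" and U2: "U2 \<in> cl \<sigma> C"
    and hu2: "hom \<sigma> u2 U2 T" and P: "partial_emb \<sigma> U1 U2 u1 u2 X h"
    and Y: "finite Y" "h ` X \<subseteq> Y" "Y \<subseteq> dom U2"
  obtains e where "emb \<sigma> e (gen_struc \<sigma> U2 Y) U1" "\<forall>z\<in>gen_set \<sigma> U2 Y. u1 (e z) = u2 z"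
    "\<forall>x\<in>gen_set \<sigma> U1 X. h x \<in> gen_set \<sigma> U2 Y \<and> e (h x) = x"
proof -
  have w1: "wf_struc \<sigma> U1" and w2: "wf_struc \<sigma> U2" using cl_wf[OF U1] cl_wf[OF U2] .
  have X: "finite X" "X \<subseteq> dom U1" and eh: "emb \<sigma> h (gen_struc \<sigma> U1 X) U2"
    and c: "\<forall>x\<in>gen_set \<sigma> U1 X. u2 (h x) = u1 x" using P unfolding partial_emb_def by auto
  let ?A = "gen_struc \<sigma> U1 X" and ?B = "gen_struc \<sigma> U2 Y"
  have wA: "wf_struc \<sigma> ?A" and sA: "substr \<sigma> ?A U1" and sB: "substr \<sigma> ?B U2"
    using wf_gen_struc[OF w1 X(2)] substr_gen_struc[OF w1 X(2)] substr_gen_struc[OF w2 Y(3)] .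
  have XA: "X \<subseteq> dom ?A" using gen_set_superset by simp
  have imh: "h ` gen_set \<sigma> U1 X \<subseteq> gen_set \<sigma> U2 Y"
  proof -
    have "h ` gen_set \<sigma> ?A X = gen_set \<sigma> U2 (h ` X)"
      using hom_image_gen_set[OF wA w2 XA embD(1)[OF eh]] .
    also have "\<dots> \<subseteq> gen_set \<sigma> U2 Y" using gen_set_mono[OF w2 Y(3,2)] .
    finally show ?thesis using gen_set_substr[OF sA XA] by simp
  qed
  have f: "emb \<sigma> h ?A ?B" using emb_into_substr[OF eh sB _ wA] imh by simp
  obtain e where "emb \<sigma> e ?B U1" "\<forall>x\<in>gen_set \<sigma> U1 X. e (h x) = x" "\<forall>z\<in>gen_set \<sigma> U2 Y. u1 (e z) = u2 z"
    using ext_propE[OF E gen_struc_in_age[OF K U1 X] gen_struc_in_age[OF K U2 Y(1,3)]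
        emb_id_substr[OF sA] f hom_restrict_substr[OF sB hu2]] c by auto
  then show ?thesis using that imh by blast
qed

lemma partial_emb_back:
  assumes K: "is_age \<sigma> C" and E: "ext_prop \<sigma> C T U1 u1" and U1: "U1 \<in> cl \<sigma> C" and U2: "U2 \<in> cl \<sigma> C"
    and hu2: "hom \<sigma> u2 U2 T" and P: "partial_emb \<sigma> U1 U2 u1 u2 X h" and y: "y \<in> dom U2"
  shows "\<exists>X' h'. partial_emb \<sigma> U1 U2 u1 u2 X' h' \<and> X \<subseteq> X' \<and> (\<forall>x\<in>gen_set \<sigma> U1 X. h' x = h x) \<and>
     y \<in> h' ` gen_set \<sigma> U1 X'"
proof -
  let ?Y = "insert y (h ` X)"
  have X: "finite X" and eh: "emb \<sigma> h (gen_struc \<sigma> U1 X) U2" using P unfolding partial_emb_def by auto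
  have "h ` X \<subseteq> dom U2" using homD(1)[OF embD(1)[OF eh]] gen_set_superset[of X \<sigma> U1] by auto
  then obtain e where e: "emb \<sigma> e (gen_struc \<sigma> U2 ?Y) U1" "\<forall>z\<in>gen_set \<sigma> U2 ?Y. u1 (e z) = u2 z"
    "\<forall>x\<in>gen_set \<sigma> U1 X. h x \<in> gen_set \<sigma> U2 ?Y \<and> e (h x) = x"
    using partial_emb_pullback[OF K E U1 U2 hu2 P, of ?Y] X y by auto
  have inj: "inj_on e (gen_set \<sigma> U2 ?Y)" using embD(2)[OF e(1)] by simp
  have yY: "y \<in> gen_set \<sigma> U2 ?Y" using gen_set_superset by blast
  let ?X' = "insert (e y) X" and ?h' = "inv_into (gen_set \<sigma> U2 ?Y) e"
  have "?X' \<subseteq> e ` gen_set \<sigma> U2 ?Y" using yY e(3) gen_set_superset[of X \<sigma> U1] by force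
  then have "partial_emb \<sigma> U1 U2 u1 u2 ?X' ?h'"
    using partial_emb_inverse[OF substr_gen_struc[OF cl_wf[OF U2]] e(1)] e(2) X y
      \<open>h ` X \<subseteq> dom U2\<close> by simp
  moreover have "\<forall>x\<in>gen_set \<sigma> U1 X. ?h' x = h x" using e(3) inj by (simp add: inv_into_f_eq)
  moreover have "y \<in> ?h' ` gen_set \<sigma> U1 ?X'"
  proof -
    have "?h' (e y) = y" using inj yY by simp
    moreover have "e y \<in> gen_set \<sigma> U1 ?X'" using gen_set_superset by blast
    ultimately show ?thesis by (metis image_eqI)
  qed
  ultimately show ?thesis by blast
qed

lemma partial_emb_chain_limit:
  assumes w1: "wf_struc \<sigma> U1"
    and P: "\<And>n. partial_emb \<sigma> U1 U2 u1 u2 (X n) (h n)"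
    and mono: "\<And>n. X n \<subseteq> X (Suc n)"
    and agree: "\<And>n. \<forall>x\<in>gen_set \<sigma> U1 (X n). h (Suc n) x = h n x"
    and cov: "\<forall>x\<in>dom U1. \<exists>n. x \<in> gen_set \<sigma> U1 (X n)"
  shows "\<exists>H. emb \<sigma> H U1 U2 \<and> (\<forall>n. \<forall>x\<in>gen_set \<sigma> U1 (X n). H x = h n x) \<and>
     (\<forall>x\<in>dom U1. u2 (H x) = u1 x)"
proof -
  let ?N = "\<lambda>n. gen_struc \<sigma> U1 (X n)"
  have Xd: "X n \<subseteq> dom U1" for n using P unfolding partial_emb_def by blast
  have monoN: "mono (\<lambda>n. gen_set \<sigma> U1 (X n))"
  proof (rule monoI)
    show "gen_set \<sigma> U1 (X n) \<le> gen_set \<sigma> U1 (X m)" if "n \<le> m" for n m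
      using gen_set_mono[OF w1 Xd] lift_Suc_mono_le[of X, OF mono that] by simp
  qed
  have N: "exhausting_chain \<sigma> ?N U1"
    unfolding exhausting_chain_def using w1 substr_gen_struc[OF w1 Xd] monoN cov gen_set_subset_dom[OF w1 Xd]
    by auto
  let ?H = "glue (\<lambda>n. gen_set \<sigma> U1 (X n)) h"
  have "emb \<sigma> ?H U1 U2" using emb_glue[OF N] P agree unfolding partial_emb_def by simp
  moreover have H: "\<forall>n. \<forall>x\<in>gen_set \<sigma> U1 (X n). ?H x = h n x"
    using glue_eq[OF monoN agree] by simp
  moreover have "\<forall>x\<in>dom U1. u2 (?H x) = u1 x" using cov H P unfolding partial_emb_def by metis
  ultimately show ?thesis by blast
qed

lemma partial_emb_empty:
  assumes K: "is_age \<sigma> C" and U1: "U1 \<in> cl \<sigma> C" and U2: "U2 \<in> cl \<sigma> C"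
    and h1: "hom \<sigma> u1 U1 T" and h2: "hom \<sigma> u2 U2 T"
  shows "\<exists>p. partial_emb \<sigma> U1 U2 u1 u2 {} p"
proof -
  have w1: "wf_struc \<sigma> U1" and w2: "wf_struc \<sigma> U2" using cl_wf[OF U1] cl_wf[OF U2] by auto
  have G1: "gen_struc \<sigma> U1 {} \<in> C" and G2: "gen_struc \<sigma> U2 {} \<in> C" using gen_struc_in_age[OF K U1] gen_struc_in_age[OF K U2] by auto

  obtain \<phi> where phi: "iso \<sigma> \<phi> (gen_struc \<sigma> U1 {}) (gen_struc \<sigma> U2 {})" using gen_struc_empty_iso[OF K w1 w2 G1 G2] by blast
  have s1: "substr \<sigma> (gen_struc \<sigma> U1 {}) U1" and s2: "substr \<sigma> (gen_struc \<sigma> U2 {}) U2"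
    using substr_gen_struc[OF w1] substr_gen_struc[OF w2] by auto
  have e: "emb \<sigma> \<phi> (gen_struc \<sigma> U1 {}) U2" using emb_into_superstr[OF _ s2] phi unfolding iso_def by blast
  have wG: "wf_struc \<sigma> (gen_struc \<sigma> U1 {})" using wf_gen_struc[OF w1] by simp
  have "\<forall>x\<in>gen_set \<sigma> (gen_struc \<sigma> U1 {}) {}. u2 (\<phi> x) = u1 x"
    using hom_eq_on_gen_set[OF wG _ hom_comp[OF embD(1)[OF e] h2] hom_restrict_substr[OF s1 h1], of "{}"] by simp
  moreover have "gen_set \<sigma> (gen_struc \<sigma> U1 {}) {} = gen_set \<sigma> U1 {}" using gen_set_substr[OF s1] by simp
  ultimately show ?thesis using e unfolding partial_emb_def by auto
qed

lemma ext_prop_universal: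
  assumes K: "is_age \<sigma> C" and E: "ext_prop \<sigma> C T U u" and U: "U \<in> cl \<sigma> C" and hu: "hom \<sigma> u U T"
    and A: "A \<in> cl \<sigma> C" and h: "hom \<sigma> h A T"
  shows "\<exists>\<iota>. emb \<sigma> \<iota> A U \<and> (\<forall>x\<in>dom A. h x = u (\<iota> x))"
proof -
  let ?P = "\<lambda>n s. partial_emb \<sigma> A U h u (fst s) (snd s)"
  let ?Q = "\<lambda>n s s'. fst s \<subseteq> fst s' \<and> (\<forall>x\<in>gen_set \<sigma> A (fst s). snd s' x = snd s x) \<and>
     (n \<in> dom A \<longrightarrow> n \<in> fst s')"
  obtain p where "partial_emb \<sigma> A U h u {} p" using partial_emb_empty[OF K A U h hu] by blast
  then have start: "\<exists>s. ?P 0 s" by auto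
  have step: "\<exists>s'. ?P (Suc n) s' \<and> ?Q n s s'" if P: "?P n s" for s n
  proof (cases "n \<in> dom A")
    case True
    obtain k where "partial_emb \<sigma> A U h u (insert n (fst s)) k" "\<forall>x\<in>gen_set \<sigma> A (fst s). k x = snd s x"
      using partial_emb_forth[OF K E A h P True] by blast
    then show ?thesis by (intro exI[of _ "(insert n (fst s), k)"]) auto
  qed (use P in auto)
  obtain st where st: "\<And>n. ?P n (st n) \<and> ?Q n (st n) (st (Suc n))"
    using dependent_nat_choice[of ?P ?Q, OF start step] by blast
  have "\<forall>x\<in>dom A. \<exists>n. x \<in> gen_set \<sigma> A (fst (st n))"
    using st gen_set_superset by blast
  then show ?thesis
    using partial_emb_chain_limit[of \<sigma> A U h u "\<lambda>n. fst (st n)" "\<lambda>n. snd (st n)", OF cl_wf[OF A]] st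
    by metis
qed

lemma partial_emb_back_and_forth_step:
  assumes K: "is_age \<sigma> C" and E1: "ext_prop \<sigma> C T U1 u1" and E2: "ext_prop \<sigma> C T U2 u2"
    and U1: "U1 \<in> cl \<sigma> C" and U2: "U2 \<in> cl \<sigma> C"
    and h1: "hom \<sigma> u1 U1 T" and h2: "hom \<sigma> u2 U2 T" and P: "partial_emb \<sigma> U1 U2 u1 u2 X h"
  shows "\<exists>X' h'. partial_emb \<sigma> U1 U2 u1 u2 X' h' \<and> X \<subseteq> X' \<and> (\<forall>x\<in>gen_set \<sigma> U1 X. h' x = h x) \<and>
    (n \<in> dom U1 \<longrightarrow> n \<in> X') \<and> (n \<in> dom U2 \<longrightarrow> n \<in> h' ` gen_set \<sigma> U1 X')"
proof -
  obtain X1 k1 where s1: "partial_emb \<sigma> U1 U2 u1 u2 X1 k1" "X \<subseteq> X1"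
    "\<forall>x\<in>gen_set \<sigma> U1 X. k1 x = h x" "n \<in> dom U1 \<longrightarrow> n \<in> X1"
  proof (cases "n \<in> dom U1")
    case True
    then show ?thesis using partial_emb_forth[OF K E2 U1 h1 P True] that by blast
  qed (use P that in blast)
  obtain X2 k2 where s2: "partial_emb \<sigma> U1 U2 u1 u2 X2 k2" "X1 \<subseteq> X2"
    "\<forall>x\<in>gen_set \<sigma> U1 X1. k2 x = k1 x" "n \<in> dom U2 \<longrightarrow> n \<in> k2 ` gen_set \<sigma> U1 X2"
  proof (cases "n \<in> dom U2")
    case True
    then show ?thesis using partial_emb_back[OF K E1 U1 U2 h2 s1(1) True] that by blast
  qed (use s1 that in blast)
  have "X1 \<subseteq> dom U1" using s1(1) unfolding partial_emb_def by blast
  then have "gen_set \<sigma> U1 X \<subseteq> gen_set \<sigma> U1 X1" using gen_set_mono[OF cl_wf[OF U1]] s1(2) by blast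
  then show ?thesis using s1 s2 by (intro exI[of _ X2] exI[of _ k2]) auto
qed

lemma ext_prop_back_forth:
  assumes K: "is_age \<sigma> C" and E1: "ext_prop \<sigma> C T U1 u1" and E2: "ext_prop \<sigma> C T U2 u2"
    and U1: "U1 \<in> cl \<sigma> C" and U2: "U2 \<in> cl \<sigma> C"
    and h1: "hom \<sigma> u1 U1 T" and h2: "hom \<sigma> u2 U2 T" and p: "partial_emb \<sigma> U1 U2 u1 u2 X0 p"
  shows "\<exists>H. iso \<sigma> H U1 U2 \<and> (\<forall>x\<in>dom U1. u2 (H x) = u1 x) \<and> (\<forall>x\<in>gen_set \<sigma> U1 X0. H x = p x)"
proof -
  have w1: "wf_struc \<sigma> U1" using cl_wf[OF U1] .
  let ?P = "\<lambda>n s. partial_emb \<sigma> U1 U2 u1 u2 (fst s) (snd s) \<and> (n = 0 \<longrightarrow> s = (X0, p))"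
  let ?Q = "\<lambda>n s s'. fst s \<subseteq> fst s' \<and> (\<forall>x\<in>gen_set \<sigma> U1 (fst s). snd s' x = snd s x) \<and>
     (n \<in> dom U1 \<longrightarrow> n \<in> fst s') \<and> (n \<in> dom U2 \<longrightarrow> n \<in> snd s' ` gen_set \<sigma> U1 (fst s'))"
  have start: "\<exists>s. ?P 0 s" using p by auto
  have step: "\<exists>s'. ?P (Suc n) s' \<and> ?Q n s s'" if "?P n s" for s n
    using partial_emb_back_and_forth_step[OF K E1 E2 U1 U2 h1 h2, of "fst s" "snd s" n] that by auto
  obtain st where st: "\<And>n. ?P n (st n) \<and> ?Q n (st n) (st (Suc n))"
    using dependent_nat_choice[of ?P ?Q, OF start step] by blast
  have "\<forall>x\<in>dom U1. \<exists>n. x \<in> gen_set \<sigma> U1 (fst (st n))"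
    using st gen_set_superset by blast
  then obtain H where H: "emb \<sigma> H U1 U2" "\<forall>n. \<forall>x\<in>gen_set \<sigma> U1 (fst (st n)). H x = snd (st n) x"
    "\<forall>x\<in>dom U1. u2 (H x) = u1 x"
    using partial_emb_chain_limit[of \<sigma> U1 U2 u1 u2 "\<lambda>n. fst (st n)" "\<lambda>n. snd (st n)", OF w1] st
    by metis
  have "dom U2 \<subseteq> H ` dom U1"
  proof
    fix y assume y: "y \<in> dom U2"
    then obtain z where z: "z \<in> gen_set \<sigma> U1 (fst (st (Suc y)))" "y = snd (st (Suc y)) z"
      using st[of y] by blast
    have "fst (st (Suc y)) \<subseteq> dom U1" using st[of "Suc y"] unfolding partial_emb_def by blast
    then have "z \<in> dom U1" using gen_set_subset_dom[OF w1] z(1) by blast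
    moreover have "H z = y" using H(2) z by auto
    ultimately show "y \<in> H ` dom U1" by blast
  qed
  then have "iso \<sigma> H U1 U2" using H(1) homD(1)[OF embD(1)[OF H(1)]] unfolding iso_def by blast
  moreover have "st 0 = (X0, p)" using st by blast
  then have "\<forall>x\<in>gen_set \<sigma> U1 X0. H x = p x" using H(2) by (metis fst_conv snd_conv)
  ultimately show ?thesis using H(3) by blast
qed

lemma ext_prop_homogeneous:
  assumes K: "is_age \<sigma> C" and E: "ext_prop \<sigma> C T U u" and U: "U \<in> cl \<sigma> C" and hu: "hom \<sigma> u U T"
  shows "homogeneous_hom \<sigma> u U T"
  unfolding homogeneous_hom_def
proof (intro conjI hu allI impI)
  fix A \<iota> assume a: "substr \<sigma> A U \<and> fin_gen \<sigma> A \<and> emb \<sigma> \<iota> A U \<and> (\<forall>x\<in>dom A. u (\<iota> x) = u x)"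
  have w: "wf_struc \<sigma> U" using cl_wf[OF U] .
  have sA: "substr \<sigma> A U" and fg: "fin_gen \<sigma> A" and ei: "emb \<sigma> \<iota> A U"
    and ci: "\<forall>x\<in>dom A. u (\<iota> x) = u x" using a by auto
  obtain X0 where X0: "finite X0" "X0 \<subseteq> dom A" "gen_set \<sigma> A X0 = dom A" using fin_gen_generators[OF fg] by blast
  have XU: "X0 \<subseteq> dom U" using X0(2) sA unfolding substr_def by auto
  have g: "gen_set \<sigma> U X0 = dom A" using gen_set_substr[OF sA X0(2)] X0(3) by simp
  have "substr \<sigma> (gen_struc \<sigma> U X0) A" using substr_between[OF substr_gen_struc[OF w XU] sA] g by simp
  hence "emb \<sigma> \<iota> (gen_struc \<sigma> U X0) U" using emb_restrict_substr ei by blast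
  hence "partial_emb \<sigma> U U u u X0 \<iota>" using X0(1) XU ci g unfolding partial_emb_def by auto
  then obtain H where "iso \<sigma> H U U" "\<forall>x\<in>dom U. u (H x) = u x" "\<forall>x\<in>gen_set \<sigma> U X0. H x = \<iota> x"
    using ext_prop_back_forth[OF K E E U U hu hu] by blast
  thus "\<exists>\<alpha>. iso \<sigma> \<alpha> U U \<and> (\<forall>x\<in>dom U. u (\<alpha> x) = u x) \<and> (\<forall>x\<in>dom A. \<alpha> x = \<iota> x)" using g by auto
qed

lemma homogeneous_hom_emb:
  assumes Ho: "homogeneous_hom \<sigma> u U T" and wU: "wf_struc \<sigma> U" and A: "fin_gen \<sigma> A"
    and a: "emb \<sigma> a A U" and a': "emb \<sigma> a' A U" and c: "\<forall>x\<in>dom A. u (a x) = u (a' x)"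
  shows "\<exists>\<alpha>. iso \<sigma> \<alpha> U U \<and> (\<forall>x\<in>dom U. u (\<alpha> x) = u x) \<and> (\<forall>x\<in>dom A. \<alpha> (a x) = a' x)"
proof -
  have wA: "wf_struc \<sigma> A" using A unfolding fin_gen_def by blast
  obtain X where X: "finite X" "X \<subseteq> dom A" "gen_set \<sigma> A X = dom A" using fin_gen_generators[OF A] by blast
  have aX: "a ` X \<subseteq> dom U" using X(2) homD(1)[OF embD(1)[OF a]] by auto
  have dA0: "gen_set \<sigma> U (a ` X) = a ` dom A"
    using hom_image_gen_set[OF wA wU X(2) embD(1)[OF a]] X(3) by simp
  let ?A0 = "gen_struc \<sigma> U (a ` X)" and ?ai = "inv_into (dom A) a"
  have "emb \<sigma> ?ai ?A0 A" using emb_inv_into_restrict[OF a wA] dA0 by (simp add: gen_struc_def)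
  then have k: "emb \<sigma> (\<lambda>z. a' (?ai z)) ?A0 U" using emb_comp[OF _ a'] by blast
  have "u (a' (?ai z)) = u z" if "z \<in> dom ?A0" for z
    using that dA0 c embD(2)[OF a] by auto
  then obtain \<alpha> where "iso \<sigma> \<alpha> U U" "\<forall>x\<in>dom U. u (\<alpha> x) = u x" "\<forall>z\<in>dom ?A0. \<alpha> z = a' (?ai z)"
    using Ho substr_gen_struc[OF wU aX] fin_gen_gen_struc[OF wU _ aX] X(1) k
    unfolding homogeneous_hom_def by blast
  moreover have "\<forall>x\<in>dom A. a' (?ai (a x)) = a' x" using embD(2)[OF a] by simp
  ultimately show ?thesis using dA0 by auto
qed

lemma universal_homogeneous_ext_prop:
  assumes K: "is_age \<sigma> C" and Un: "universal_within \<sigma> C u U T" and Ho: "homogeneous_hom \<sigma> u U T"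
  shows "ext_prop \<sigma> C T U u"
  unfolding ext_prop_def
proof (intro ballI allI impI)
  fix A B a f g
  assume A: "A \<in> C" and B: "B \<in> C"
    and asm: "emb \<sigma> a A U \<and> emb \<sigma> f A B \<and> hom \<sigma> g B T \<and> (\<forall>x\<in>dom A. g (f x) = u (a x))"
  then have ea: "emb \<sigma> a A U" and ef: "emb \<sigma> f A B" and hg: "hom \<sigma> g B T"
    and c: "\<forall>x\<in>dom A. g (f x) = u (a x)" by auto
  have wU: "wf_struc \<sigma> U" using Un cl_wf unfolding universal_within_def by blast
  obtain \<iota> where \<iota>: "emb \<sigma> \<iota> B U" "\<forall>y\<in>dom B. g y = u (\<iota> y)"
    using Un age_subset_cl[OF K B] hg unfolding universal_within_def by blast
  have "\<forall>x\<in>dom A. u (\<iota> (f x)) = u (a x)" using \<iota>(2) c homD(1)[OF embD(1)[OF ef]] by metis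
  then obtain \<alpha> where \<alpha>: "iso \<sigma> \<alpha> U U" "\<forall>x\<in>dom U. u (\<alpha> x) = u x" "\<forall>x\<in>dom A. \<alpha> (\<iota> (f x)) = a x"
    using homogeneous_hom_emb[OF Ho wU age_fin_gen[OF K A] emb_comp[OF ef \<iota>(1)] ea] by blast
  show "extends_along \<sigma> U u A B a f g"
    unfolding extends_along_def
  proof (intro exI[of _ "\<lambda>y. \<alpha> (\<iota> y)"] conjI ballI)
    show "emb \<sigma> (\<lambda>y. \<alpha> (\<iota> y)) B U" using emb_comp[OF \<iota>(1)] \<alpha>(1) unfolding iso_def by blast
    show "\<alpha> (\<iota> (f x)) = a x" if "x \<in> dom A" for x using \<alpha>(3) that by blast
    show "u (\<alpha> (\<iota> y)) = g y" if "y \<in> dom B" for y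
      using \<alpha>(2) \<iota>(2) homD(1)[OF embD(1)[OF \<iota>(1)]] that by metis
  qed
qed

lemma ext_prop_unique:
  assumes K: "is_age \<sigma> C" and E: "ext_prop \<sigma> C T U u" and U: "U \<in> cl \<sigma> C" and hu: "hom \<sigma> u U T"
    and Un: "universal_within \<sigma> C u' U' T" and Ho: "homogeneous_hom \<sigma> u' U' T"
  shows "\<exists>h. iso \<sigma> h U' U \<and> (\<forall>x\<in>dom U'. u' x = u (h x))"
proof -
  have E': "ext_prop \<sigma> C T U' u'" using universal_homogeneous_ext_prop[OF K Un Ho] .
  have U': "U' \<in> cl \<sigma> C" and hu': "hom \<sigma> u' U' T" using Un unfolding universal_within_def by auto
  obtain p where "partial_emb \<sigma> U' U u' u {} p" using partial_emb_empty[OF K U' U hu' hu] by blast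
  then obtain H where "iso \<sigma> H U' U" "\<forall>x\<in>dom U'. u (H x) = u' x"
    using ext_prop_back_forth[OF K E' E U' U hu' hu] by blast
  thus ?thesis by auto
qed

section \<open>Amalgamation over the target\<close>

definition amalg_over :: "('r,'f) sig \<Rightarrow> ('r,'f) struc set \<Rightarrow> ('r,'f) struc \<Rightarrow> bool" where
  "amalg_over \<sigma> C T \<longleftrightarrow> (\<forall>M\<in>C. \<forall>A\<in>C. \<forall>B\<in>C. \<forall>a f m g.
     emb \<sigma> a A M \<and> emb \<sigma> f A B \<and> hom \<sigma> m M T \<and> hom \<sigma> g B T \<and> (\<forall>x\<in>dom A. g (f x) = m (a x)) \<longrightarrow>
     (\<exists>D\<in>C. \<exists>i e d. emb \<sigma> i M D \<and> emb \<sigma> e B D \<and> hom \<sigma> d D T \<and> (\<forall>x\<in>dom A. i (a x) = e (f x)) \<and>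
        (\<forall>x\<in>dom M. d (i x) = m x) \<and> (\<forall>y\<in>dom B. d (e y) = g y)))"

lemma emb_of_comp_emb:
  assumes g: "hom \<sigma> g M D" and k: "hom \<sigma> k D E" and e: "emb \<sigma> e M E" and c: "\<forall>x\<in>dom M. k (g x) = e x"
  shows "emb \<sigma> g M D"
proof (rule embI[OF g])
  show "inj_on g (dom M)"
  proof (rule inj_onI)
    fix x y assume "x \<in> dom M" "y \<in> dom M" "g x = g y"
    hence "e x = e y" using c by metis
    thus "x = y" using embD(2)[OF e] \<open>x \<in> dom M\<close> \<open>y \<in> dom M\<close> by (auto dest: inj_onD)
  qed
  show "rel M R xs" if a: "set xs \<subseteq> dom M" "length xs = fst \<sigma> R" "rel D R (map g xs)" for xs R
  proof -
    have "set (map g xs) \<subseteq> dom D" using a homD(1)[OF g] by auto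
    hence "rel E R (map k (map g xs))" using homD(3)[OF k, of "map g xs" R] a by simp
    moreover have "map k (map g xs) = map e xs" using a c by (induct xs) auto
    ultimately show ?thesis using embD(3)[OF e a(1,2)] by metis
  qed
qed

lemma amalg_overD:
  assumes "amalg_over \<sigma> C T" and "M \<in> C" "A \<in> C" "B \<in> C"
    and "emb \<sigma> a A M" "emb \<sigma> f A B" "hom \<sigma> m M T" "hom \<sigma> g B T" "\<forall>x\<in>dom A. g (f x) = m (a x)"
  obtains D i e d where "D \<in> C" "emb \<sigma> i M D" "emb \<sigma> e B D" "hom \<sigma> d D T"
    "\<forall>x\<in>dom A. i (a x) = e (f x)" "\<forall>x\<in>dom M. d (i x) = m x" "\<forall>y\<in>dom B. d (e y) = g y"
  using assms(1)[unfolded amalg_over_def, rule_format, OF assms(2-4), of a f m g] assms(5-) by blast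

text \<open>The canonical amalgam lies in \<open>C\<close> by freeness and maps to \<open>T\<close> by its universal property; its
  legs are embeddings since composed with the induced map to an ordinary amalgam in \<open>\<U>\<close> they become
  embeddings.\<close>

lemma strict_free_amalg_over:
  assumes SF: "strict_fraisse \<sigma> \<U>" and T: "T \<in> cl \<sigma> \<U>" and sub: "C \<subseteq> \<U>" and FR: "free_in \<sigma> C \<U>"
  shows "amalg_over \<sigma> C T"
  unfolding amalg_over_def
proof (intro ballI allI impI)
  fix M A B a f m g
  assume M: "M \<in> C" and A: "A \<in> C" and B: "B \<in> C"
    and asm: "emb \<sigma> a A M \<and> emb \<sigma> f A B \<and> hom \<sigma> m M T \<and> hom \<sigma> g B T \<and> (\<forall>x\<in>dom A. g (f x) = m (a x))"
  then have a: "emb \<sigma> a A M" and f: "emb \<sigma> f A B" and m: "hom \<sigma> m M T" and g: "hom \<sigma> g B T"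
    and c: "\<forall>x\<in>dom A. g (f x) = m (a x)" by auto
  have KU: "is_age \<sigma> \<U>" and AP: "amalg_prop \<sigma> \<U>" using SF unfolding strict_fraisse_def fraisse_def by auto
  have MU: "M \<in> \<U>" and AU: "A \<in> \<U>" and BU: "B \<in> \<U>" using sub M A B by auto
  obtain D g1 g2 where D: "D \<in> \<U>" and po: "pushout \<sigma> \<U> A M B a f D g1 g2"
    using SF AU MU BU a f unfolding strict_fraisse_def by blast
  have DC: "D \<in> C" using FR A M B a f D po unfolding free_in_def by blast
  have hg1: "hom \<sigma> g1 M D" and hg2: "hom \<sigma> g2 B D" and com: "\<forall>x\<in>dom A. g1 (a x) = g2 (f x)"
    and univ: "\<And>E k1 k2. E \<in> cl \<sigma> \<U> \<Longrightarrow> hom \<sigma> k1 M E \<Longrightarrow> hom \<sigma> k2 B E \<Longrightarrow>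
        \<forall>x\<in>dom A. k1 (a x) = k2 (f x) \<Longrightarrow>
        \<exists>k. hom \<sigma> k D E \<and> (\<forall>x\<in>dom M. k (g1 x) = k1 x) \<and> (\<forall>x\<in>dom B. k (g2 x) = k2 x)"
    using po unfolding pushout_def by blast+
  obtain d where d: "hom \<sigma> d D T" "\<forall>x\<in>dom M. d (g1 x) = m x" "\<forall>x\<in>dom B. d (g2 x) = g x"
    using univ[OF T m g] c by auto
  obtain C' e1 e2 where C': "C' \<in> \<U>" "emb \<sigma> e1 M C'" "emb \<sigma> e2 B C'" "\<forall>x\<in>dom A. e1 (a x) = e2 (f x)"
    using AP AU MU BU a f unfolding amalg_prop_def by blast
  obtain k where k: "hom \<sigma> k D C'" "\<forall>x\<in>dom M. k (g1 x) = e1 x" "\<forall>x\<in>dom B. k (g2 x) = e2 x"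
    using univ[OF age_subset_cl[OF KU C'(1)] embD(1)[OF C'(2)] embD(1)[OF C'(3)] C'(4)] by blast
  have "emb \<sigma> g1 M D" using emb_of_comp_emb[OF hg1 k(1) C'(2) k(2)] .
  moreover have "emb \<sigma> g2 B D" using emb_of_comp_emb[OF hg2 k(1) C'(3) k(3)] .
  ultimately show "\<exists>D\<in>C. \<exists>i e d. emb \<sigma> i M D \<and> emb \<sigma> e B D \<and> hom \<sigma> d D T \<and>
    (\<forall>x\<in>dom A. i (a x) = e (f x)) \<and> (\<forall>x\<in>dom M. d (i x) = m x) \<and> (\<forall>y\<in>dom B. d (e y) = g y)"
    using DC d com by blast
qed

section \<open>Construction of a homomorphism with the extension property\<close>

definition transport :: "(nat \<Rightarrow> nat) \<Rightarrow> ('r,'f) struc \<Rightarrow> ('r,'f) struc" where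
  "transport r D = \<lparr>dom = r ` dom D,
     rel = (\<lambda>R xs. set xs \<subseteq> r ` dom D \<and> rel D R (map (inv_into (dom D) r) xs)),
     fn = (\<lambda>F xs. r (fn D F (map (inv_into (dom D) r) xs)))\<rparr>"

lemma transport_simps[simp]: "dom (transport r D) = r ` dom D"
  "rel (transport r D) R xs \<longleftrightarrow> set xs \<subseteq> r ` dom D \<and> rel D R (map (inv_into (dom D) r) xs)"
  "fn (transport r D) F xs = r (fn D F (map (inv_into (dom D) r) xs))"
  by (auto simp: transport_def)

lemma transport_iso:
  assumes w: "wf_struc \<sigma> D" and inj: "inj_on r (dom D)"
  shows "wf_struc \<sigma> (transport r D) \<and> iso \<sigma> r D (transport r D)"
proof -
  let ?ri = "inv_into (dom D) r"
  have mi: "set xs \<subseteq> r ` dom D \<Longrightarrow> set (map ?ri xs) \<subseteq> dom D" for xs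
    by (induct xs) (auto simp: inv_into_into)
  have mr: "set xs \<subseteq> dom D \<Longrightarrow> map ?ri (map r xs) = xs" for xs
    using inj by (induct xs) auto
  have wf: "wf_struc \<sigma> (transport r D)"
    unfolding wf_struc_def
  proof (intro conjI allI impI)
    fix F xs assume a: "set xs \<subseteq> dom (transport r D) \<and> length xs = snd \<sigma> F"
    have "fn D F (map ?ri xs) \<in> dom D" using wf_fn[OF w mi] a by simp
    thus "fn (transport r D) F xs \<in> dom (transport r D)" by simp
  next
    fix R xs assume a: "rel (transport r D) R xs"
    thus "set xs \<subseteq> dom (transport r D)" by simp
  next
    fix R xs assume a: "rel (transport r D) R xs"
    have "length (map ?ri xs) = fst \<sigma> R" using wf_rel[OF w, of R "map ?ri xs"] a by simp
    thus "length xs = fst \<sigma> R" by simp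
  qed
  have hom: "hom \<sigma> r D (transport r D)"
  proof (rule homI)
    show "x \<in> dom D \<Longrightarrow> r x \<in> dom (transport r D)" for x by simp
    show "set xs \<subseteq> dom D \<Longrightarrow> length xs = snd \<sigma> F \<Longrightarrow> r (fn D F xs) = fn (transport r D) F (map r xs)" for xs F
      using mr by simp
    show "set xs \<subseteq> dom D \<Longrightarrow> length xs = fst \<sigma> R \<Longrightarrow> rel D R xs \<Longrightarrow> rel (transport r D) R (map r xs)" for xs R
      using mr by auto
  qed
  have "emb \<sigma> r D (transport r D)"
  proof (rule embI[OF hom inj])
    show "set xs \<subseteq> dom D \<Longrightarrow> length xs = fst \<sigma> R \<Longrightarrow> rel (transport r D) R (map r xs) \<Longrightarrow> rel D R xs" for xs R
      using mr by auto
  qed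
  thus ?thesis using wf unfolding iso_def by simp
qed

lemma substr_transport:
  assumes wM: "wf_struc \<sigma> M" and wD: "wf_struc \<sigma> D" and i: "emb \<sigma> i M D"
    and inj: "inj_on r (dom D)" and ri: "\<forall>x\<in>dom M. r (i x) = x"
  shows "substr \<sigma> M (transport r D)"
proof -
  let ?D' = "transport r D" and ?ri = "inv_into (dom D) r"
  have iM: "i ` dom M \<subseteq> dom D" using homD(1)[OF embD(1)[OF i]] by auto
  have "?ri x = i x" if "x \<in> dom M" for x
    using ri inj iM that by (metis image_subset_iff inv_into_f_f)
  then have mrim: "set xs \<subseteq> dom M \<Longrightarrow> map ?ri xs = map i xs" for xs by (induct xs) auto
  have MD: "dom M \<subseteq> dom ?D'" using ri iM by force
  have "hom \<sigma> (\<lambda>x. x) M ?D'"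
  proof (rule homI)
    show "fn M F xs = fn ?D' F (map (\<lambda>x. x) xs)" if a: "set xs \<subseteq> dom M" "length xs = snd \<sigma> F" for xs F
    proof -
      have "fn ?D' F xs = r (fn D F (map i xs))" by (simp only: transport_simps mrim[OF a(1)])
      also have "\<dots> = r (i (fn M F xs))" using homD(2)[OF embD(1)[OF i] a] by simp
      also have "\<dots> = fn M F xs" using ri wf_fn[OF wM a] by simp
      finally show ?thesis by simp
    qed
    show "rel ?D' R (map (\<lambda>x. x) xs)" if a: "set xs \<subseteq> dom M" "length xs = fst \<sigma> R" "rel M R xs" for xs R
      using homD(3)[OF embD(1)[OF i] a] a(1) MD by (auto simp add: mrim[OF a(1)])
  qed (use MD in auto)
  moreover have "rel M R xs" if a: "set xs \<subseteq> dom M" "length xs = fst \<sigma> R" "rel ?D' R (map (\<lambda>x. x) xs)" for xs R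
    using embD(3)[OF i a(1,2)] a(3) by (simp add: mrim[OF a(1)])
  ultimately have "emb \<sigma> (\<lambda>x. x) M ?D'" by (intro embI) auto
  then show ?thesis using wM transport_iso[OF wD inj] MD unfolding substr_def by blast
qed

definition level :: "nat \<Rightarrow> nat set" where "level n = {x. fst (prod_decode x) \<le> n}"

lemma level_mono: "n \<le> m \<Longrightarrow> level n \<subseteq> level m"
  unfolding level_def by auto

text \<open>Stage \<open>n\<close> of the construction lives in \<open>level n\<close>; relabelling keeps the old elements and moves
  the new ones to \<open>level (n + 1)\<close>, where they are fresh.\<close>

definition relabel :: "(nat \<Rightarrow> nat) \<Rightarrow> nat set \<Rightarrow> nat \<Rightarrow> nat \<Rightarrow> nat" where
  "relabel i S n y = (if y \<in> i ` S then inv_into S i y else prod_encode (Suc n, y))"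

lemma relabel_inverse: "inj_on i S \<Longrightarrow> x \<in> S \<Longrightarrow> relabel i S n (i x) = x"
  unfolding relabel_def by auto

lemma relabel_level:
  assumes "S \<subseteq> level n"
  shows "relabel i S n y \<in> level (Suc n)"
proof (cases "y \<in> i ` S")
  case True
  then have "relabel i S n y \<in> S" unfolding relabel_def by (auto simp: inv_into_into)
  then show ?thesis using assms level_mono[of n "Suc n"] by auto
qed (simp add: relabel_def level_def)

lemma inj_relabel:
  assumes L: "S \<subseteq> level n"
  shows "inj (relabel i S n)"
proof (rule injI)
  fix y1 y2 assume eq: "relabel i S n y1 = relabel i S n y2"
  have new: "relabel i S n y \<notin> level n" if "y \<notin> i ` S" for y
    using that unfolding relabel_def level_def by simp
  have old: "relabel i S n y \<in> level n" if "y \<in> i ` S" for y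
    using that L unfolding relabel_def by (auto simp: inv_into_into)
  show "y1 = y2"
  proof (cases "y1 \<in> i ` S"; cases "y2 \<in> i ` S")
    assume "y1 \<in> i ` S" "y2 \<in> i ` S"
    then show ?thesis using eq unfolding relabel_def by (metis f_inv_into_f)
  next
    assume "y1 \<notin> i ` S" "y2 \<notin> i ` S"
    then show ?thesis using eq unfolding relabel_def by (simp add: prod_encode_eq)
  qed (use eq old new in metis)+
qed

lemma relabel_over_level:
  assumes wM: "wf_struc \<sigma> M" and wD: "wf_struc \<sigma> D" and i: "emb \<sigma> i M D" and L: "dom M \<subseteq> level n"
  shows "\<exists>D' r. iso \<sigma> r D D' \<and> wf_struc \<sigma> D' \<and> substr \<sigma> M D' \<and> dom D' \<subseteq> level (Suc n) \<and>
    (\<forall>x\<in>dom M. r (i x) = x)"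
proof -
  let ?r = "relabel i (dom M) n"
  have inj: "inj_on ?r (dom D)" using inj_on_subset[OF inj_relabel[OF L] subset_UNIV] .
  have ri: "\<forall>x\<in>dom M. ?r (i x) = x" using relabel_inverse[OF embD(2)[OF i]] by blast
  have "dom (transport ?r D) \<subseteq> level (Suc n)" using relabel_level[OF L] by auto
  then show ?thesis using transport_iso[OF wD inj] substr_transport[OF wM wD i inj ri] ri by blast
qed

locale ext_construction =
  fixes \<sigma> :: "('r,'f) sig" and C :: "('r,'f) struc set" and T :: "('r,'f) struc"
  assumes age: "is_age \<sigma> C" and amalg: "amalg_over \<sigma> C T" and hom_into_T: "\<exists>A\<in>C. \<exists>h. hom \<sigma> h A T"
begin

definition reps :: "('r,'f) struc set" where
  "reps = (SOME S. countable S \<and> S \<subseteq> C \<and> (\<forall>A\<in>C. \<exists>B\<in>S. isomorphic \<sigma> A B))"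

lemma reps_spec: "countable reps" "reps \<subseteq> C" "\<forall>A\<in>C. \<exists>B\<in>reps. isomorphic \<sigma> A B"
proof -
  have "\<exists>S. countable S \<and> S \<subseteq> C \<and> (\<forall>A\<in>C. \<exists>B\<in>S. isomorphic \<sigma> A B)"
    using age unfolding is_age_def by blast
  from someI_ex[OF this] show "countable reps" "reps \<subseteq> C" "\<forall>A\<in>C. \<exists>B\<in>reps. isomorphic \<sigma> A B"
    unfolding reps_def by auto
qed

definition gens :: "('r,'f) struc \<Rightarrow> nat list" where
  "gens A = (SOME xs. set xs \<subseteq> dom A \<and> gen_set \<sigma> A (set xs) = dom A)"

lemma gens_spec: "A \<in> C \<Longrightarrow> set (gens A) \<subseteq> dom A \<and> gen_set \<sigma> A (set (gens A)) = dom A"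
  unfolding gens_def by (rule someI_ex[OF age_generating_list[OF age]])

definition task :: "('r,'f) struc \<Rightarrow> (nat \<Rightarrow> nat) \<Rightarrow> ('r,'f) struc \<Rightarrow> ('r,'f) struc \<Rightarrow>
    (nat \<Rightarrow> nat) \<Rightarrow> (nat \<Rightarrow> nat) \<Rightarrow> (nat \<Rightarrow> nat) \<Rightarrow> bool" where
  "task M m A B a f g \<longleftrightarrow> A \<in> reps \<and> B \<in> reps \<and> emb \<sigma> a A M \<and> emb \<sigma> f A B \<and>
     hom \<sigma> g B T \<and> (\<forall>x\<in>dom A. g (f x) = m (a x))"

text \<open>A task is determined by the values of \<open>a\<close>, \<open>f\<close>, \<open>g\<close> on generators, so countably many codes
  suffice to schedule all of them.\<close>

definition task_code :: "('r,'f) struc \<Rightarrow> ('r,'f) struc \<Rightarrow> (nat \<Rightarrow> nat) \<Rightarrow> (nat \<Rightarrow> nat) \<Rightarrow> (nat \<Rightarrow> nat) \<Rightarrow>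
    ('r,'f) struc \<times> ('r,'f) struc \<times> nat list \<times> nat list \<times> nat list" where
  "task_code A B a f g = (A, B, map a (gens A), map f (gens A), map g (gens B))"

definition code_enum :: "nat \<Rightarrow> ('r,'f) struc \<times> ('r,'f) struc \<times> nat list \<times> nat list \<times> nat list" where
  "code_enum = from_nat_into (reps \<times> reps \<times> (UNIV :: (nat list \<times> nat list \<times> nat list) set))"

lemma code_enum_surj: "A \<in> reps \<Longrightarrow> B \<in> reps \<Longrightarrow> \<exists>j. code_enum j = task_code A B a f g"
proof -
  have "countable (reps \<times> reps \<times> (UNIV :: (nat list \<times> nat list \<times> nat list) set))"
    using reps_spec(1) by (intro countable_SIGMA) auto
  moreover assume "A \<in> reps" "B \<in> reps"
  ultimately show ?thesis using from_nat_into_surj unfolding code_enum_def task_code_def by fastforce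
qed

lemma extends_along_task_code_cong:
  assumes t1: "task M m A B a f g" and t2: "task M m A B a' f' g'"
    and c: "task_code A B a f g = task_code A B a' f' g'" and r: "extends_along \<sigma> M' m' A B a f g"
  shows "extends_along \<sigma> M' m' A B a' f' g'"
proof -
  have A: "A \<in> C" and B: "B \<in> C" using t1 reps_spec(2) unfolding task_def by auto
  have wA: "wf_struc \<sigma> A" and wB: "wf_struc \<sigma> B" using age_wf[OF age] A B by auto
  have gA: "set (gens A) \<subseteq> dom A" "gen_set \<sigma> A (set (gens A)) = dom A" using gens_spec[OF A] by auto
  have gB: "set (gens B) \<subseteq> dom B" "gen_set \<sigma> B (set (gens B)) = dom B" using gens_spec[OF B] by auto
  have l: "map a (gens A) = map a' (gens A)" "map f (gens A) = map f' (gens A)" "map g (gens B) = map g' (gens B)"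
    using c unfolding task_code_def by auto
  have h: "hom \<sigma> a A M" "hom \<sigma> a' A M" "hom \<sigma> f A B" "hom \<sigma> f' A B" "hom \<sigma> g B T" "hom \<sigma> g' B T"
    using t1 t2 unfolding task_def emb_def by auto
  have "\<forall>x\<in>dom A. a x = a' x"
    using hom_eq_on_gen_set[OF wA gA(1) h(1) h(2)] l(1) gA(2) by (simp add: map_eq_conv)
  moreover have "\<forall>x\<in>dom A. f x = f' x"
    using hom_eq_on_gen_set[OF wA gA(1) h(3) h(4)] l(2) gA(2) by (simp add: map_eq_conv)
  moreover have "\<forall>x\<in>dom B. g x = g' x"
    using hom_eq_on_gen_set[OF wB gB(1) h(5) h(6)] l(3) gB(2) by (simp add: map_eq_conv)
  ultimately show ?thesis using r unfolding extends_along_def by auto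
qed

definition stage :: "nat \<Rightarrow> ('r,'f) struc \<times> (nat \<Rightarrow> nat) \<Rightarrow> bool" where
  "stage n s \<longleftrightarrow> fst s \<in> C \<and> hom \<sigma> (snd s) (fst s) T \<and> dom (fst s) \<subseteq> level n"

text \<open>Step \<open>n\<close> handles the task with code number \<open>fst (prod_decode n)\<close>; every code number recurs at
  infinitely many steps.\<close>

definition stage_step :: "nat \<Rightarrow> ('r,'f) struc \<times> (nat \<Rightarrow> nat) \<Rightarrow> ('r,'f) struc \<times> (nat \<Rightarrow> nat) \<Rightarrow> bool" where
  "stage_step n s s' \<longleftrightarrow> substr \<sigma> (fst s) (fst s') \<and> (\<forall>x\<in>dom (fst s). snd s' x = snd s x) \<and>
     (\<forall>A B a f g. task (fst s) (snd s) A B a f g \<and> task_code A B a f g = code_enum (fst (prod_decode n)) \<longrightarrow>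
        extends_along \<sigma> (fst s') (snd s') A B a f g)"

lemma next_stage_solves_task:
  assumes S: "stage n (M, m)" and t: "task M m A B a f g"
  shows "\<exists>M' m'. stage (Suc n) (M', m') \<and> substr \<sigma> M M' \<and> (\<forall>x\<in>dom M. m' x = m x) \<and>
    extends_along \<sigma> M' m' A B a f g"
proof -
  have M: "M \<in> C" and hm: "hom \<sigma> m M T" and L: "dom M \<subseteq> level n" using S unfolding stage_def by auto
  have A: "A \<in> C" and B: "B \<in> C" and ea: "emb \<sigma> a A M" and ef: "emb \<sigma> f A B" and hg: "hom \<sigma> g B T"
    and c: "\<forall>x\<in>dom A. g (f x) = m (a x)" using t reps_spec(2) unfolding task_def by auto
  obtain D i e d where D: "D \<in> C" "emb \<sigma> i M D" "emb \<sigma> e B D" "hom \<sigma> d D T"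
    "\<forall>x\<in>dom A. i (a x) = e (f x)" "\<forall>x\<in>dom M. d (i x) = m x" "\<forall>y\<in>dom B. d (e y) = g y"
    using amalg_overD[OF amalg M A B ea ef hm hg c] by blast
  have wM: "wf_struc \<sigma> M" and wD: "wf_struc \<sigma> D" using age_wf[OF age] M D(1) by auto
  obtain D' r where R: "iso \<sigma> r D D'" "wf_struc \<sigma> D'" "substr \<sigma> M D'" "dom D' \<subseteq> level (Suc n)"
    "\<forall>x\<in>dom M. r (i x) = x"
    using relabel_over_level[OF wM wD D(2) L] by blast
  let ?ri = "inv_into (dom D) r"
  let ?m' = "\<lambda>x. d (?ri x)"
  have riso: "iso \<sigma> ?ri D' D" using iso_inv[OF R(1) wD R(2)] .
  have injr: "inj_on r (dom D)" using R(1) unfolding iso_def emb_def by auto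
  have "D' \<in> C" using age_iso[OF age D(1) R(2) riso] .
  moreover have "hom \<sigma> ?m' D' T" using hom_comp[OF _ D(4)] riso unfolding iso_def emb_def by blast
  ultimately have "stage (Suc n) (D', ?m')" using R(4) unfolding stage_def by auto
  moreover have "\<forall>x\<in>dom M. ?m' x = m x"
  proof
    fix x assume x: "x \<in> dom M"
    have "i x \<in> dom D" using x homD(1)[OF embD(1)[OF D(2)]] by auto
    then have "?ri x = i x" using R(5) x injr by (metis inv_into_f_f)
    then show "?m' x = m x" using D(6) x by simp
  qed
  moreover have "extends_along \<sigma> D' ?m' A B a f g"
    unfolding extends_along_def
  proof (intro exI[of _ "\<lambda>y. r (e y)"] conjI ballI)
    show "emb \<sigma> (\<lambda>y. r (e y)) B D'" using emb_comp[OF D(3)] R(1) unfolding iso_def by blast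
    fix x assume x: "x \<in> dom A"
    have "a x \<in> dom M" using x homD(1)[OF embD(1)[OF ea]] by auto
    then show "r (e (f x)) = a x" using D(5) R(5) x by metis
  next
    fix y assume y: "y \<in> dom B"
    have "e y \<in> dom D" using y homD(1)[OF embD(1)[OF D(3)]] by auto
    then have "?ri (r (e y)) = e y" using injr by simp
    then show "?m' (r (e y)) = g y" using D(7) y by simp
  qed
  ultimately show ?thesis using R(3) by blast
qed

lemma stage_step_exists:
  assumes S: "stage n s"
  shows "\<exists>s'. stage (Suc n) s' \<and> stage_step n s s'"
proof -
  obtain M m where s: "s = (M, m)" by (cases s)
  let ?c = "code_enum (fst (prod_decode n))"
  show ?thesis
  proof (cases "\<exists>A B a f g. task M m A B a f g \<and> task_code A B a f g = ?c")
    case False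
    have "wf_struc \<sigma> M" using S s age_wf[OF age] unfolding stage_def by auto
    then have "stage_step n s s" using False s substr_refl[of \<sigma> M] unfolding stage_step_def by auto
    moreover have "stage (Suc n) s" using S level_mono[of n "Suc n"] unfolding stage_def by auto
    ultimately show ?thesis by blast
  next
    case True
    then obtain A B a f g where t: "task M m A B a f g" and tc: "task_code A B a f g = ?c" by blast
    obtain M' m' where M': "stage (Suc n) (M', m')" "substr \<sigma> M M'" "\<forall>x\<in>dom M. m' x = m x"
      "extends_along \<sigma> M' m' A B a f g"
      using next_stage_solves_task[OF S[unfolded s] t] by blast
    have "extends_along \<sigma> M' m' A' B' a' f' g'"
      if "task M m A' B' a' f' g'" "task_code A' B' a' f' g' = ?c" for A' B' a' f' g'
    proof -
      have "task_code A' B' a' f' g' = task_code A B a f g" using that(2) tc by simp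
      moreover from this have "A' = A" "B' = B" unfolding task_code_def by auto
      ultimately show ?thesis using extends_along_task_code_cong[OF t] that(1) M'(4) by auto
    qed
    then have "stage_step n s (M', m')" using s M'(2,3) unfolding stage_step_def by auto
    then show ?thesis using M'(1) by blast
  qed
qed

lemma stage_0_exists: "\<exists>s. stage 0 s"
proof -
  obtain A h where A: "A \<in> C" and h: "hom \<sigma> h A T" using hom_into_T by blast
  have wA: "wf_struc \<sigma> A" using age_wf[OF age A] .
  let ?r = "\<lambda>y::nat. prod_encode (0, y)"
  have "inj_on ?r (dom A)" by (auto simp: inj_on_def prod_encode_eq)
  then have tr: "wf_struc \<sigma> (transport ?r A)" "iso \<sigma> ?r A (transport ?r A)"
    using transport_iso[OF wA] by auto
  have ri: "iso \<sigma> (inv_into (dom A) ?r) (transport ?r A) A" using iso_inv[OF tr(2) wA tr(1)] .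
  have "transport ?r A \<in> C" using age_iso[OF age A tr(1) ri] .
  moreover have "hom \<sigma> (\<lambda>x. h (inv_into (dom A) ?r x)) (transport ?r A) T"
    using hom_comp[OF _ h] ri unfolding iso_def emb_def by blast
  moreover have "dom (transport ?r A) \<subseteq> level 0" unfolding level_def by auto
  ultimately show ?thesis unfolding stage_def by (intro exI[of _ "(transport ?r A, _)"]) auto
qed

lemma stage_chain_extends_along:
  assumes st: "\<And>n. stage_step n (M n, m n) (M (Suc n), m (Suc n))"
    and N: "exhausting_chain \<sigma> M V" and vm: "\<And>x n. x \<in> dom (M n) \<Longrightarrow> v x = m n x"
    and A: "A \<in> reps" and B: "B \<in> reps" and ea: "emb \<sigma> a A V" and ef: "emb \<sigma> f A B"
    and hg: "hom \<sigma> g B T" and c: "\<forall>x\<in>dom A. g (f x) = v (a x)"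
  shows "extends_along \<sigma> V v A B a f g"
proof -
  have AC: "A \<in> C" using A reps_spec(2) by auto
  have sub: "\<And>n. substr \<sigma> (M n) V" using N unfolding exhausting_chain_def by blast
  obtain k where ak: "a ` dom A \<subseteq> dom (M k)"
    using fin_gen_hom_image_in_chain[OF N age_fin_gen[OF age AC] embD(1)[OF ea]] by blast
  obtain j where j: "code_enum j = task_code A B a f g" using code_enum_surj[OF A B] by blast
  define n where "n = prod_encode (j, k)"
  have "k \<le> n" unfolding n_def by (rule le_prod_encode_2)
  then have "substr \<sigma> (M k) (M n)" using chain_substr_mono[of \<sigma> M] st unfolding stage_step_def by auto
  then have an: "a ` dom A \<subseteq> dom (M n)" using ak unfolding substr_def by blast
  have "emb \<sigma> a A (M n)" using emb_into_substr[OF ea sub an age_wf[OF age AC]] .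
  moreover have "\<forall>x\<in>dom A. g (f x) = m n (a x)" using c vm an by auto
  ultimately have "task (M n) (m n) A B a f g" using A B ef hg unfolding task_def by simp
  moreover have "fst (prod_decode n) = j" unfolding n_def by simp
  ultimately have "extends_along \<sigma> (M (Suc n)) (m (Suc n)) A B a f g"
    using st[of n] j unfolding stage_step_def by auto
  then obtain e where e: "emb \<sigma> e B (M (Suc n))" "\<forall>x\<in>dom A. e (f x) = a x"
    "\<forall>y\<in>dom B. m (Suc n) (e y) = g y" unfolding extends_along_def by blast
  have "\<forall>y\<in>dom B. v (e y) = g y" using e(3) vm homD(1)[OF embD(1)[OF e(1)]] by metis
  then show ?thesis using emb_into_superstr[OF e(1) sub] e(2) unfolding extends_along_def by blast
qed

lemma ext_prop_exists: "\<exists>V v. V \<in> cl \<sigma> C \<and> hom \<sigma> v V T \<and> ext_prop \<sigma> C T V v"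
proof -
  obtain st where st: "\<And>n. stage n (st n) \<and> stage_step n (st n) (st (Suc n))"
    using dependent_nat_choice[of stage stage_step, OF stage_0_exists stage_step_exists] by blast
  define M where "M n = fst (st n)" for n
  define m where "m n = snd (st n)" for n
  have MC: "M n \<in> C" and hm: "hom \<sigma> (m n) (M n) T" for n
    using st unfolding stage_def M_def m_def by auto
  have step: "stage_step n (M n, m n) (M (Suc n), m (Suc n))" for n
    using st unfolding M_def m_def by simp
  then have chain: "substr \<sigma> (M n) (M (Suc n))" and agree: "\<forall>x\<in>dom (M n). m (Suc n) x = m n x" for n
    unfolding stage_step_def by auto
  define V where "V = chain_union \<sigma> M"
  define v where "v = glue (\<lambda>n. dom (M n)) m"
  have N: "exhausting_chain \<sigma> M V" unfolding V_def using exhausting_chain_union chain by blast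
  then have mono: "mono (\<lambda>n. dom (M n))" unfolding exhausting_chain_def by blast
  have vm: "x \<in> dom (M n) \<Longrightarrow> v x = m n x" for x n using glue_eq[OF mono agree] unfolding v_def .
  have "V \<in> cl \<sigma> C" using exhausting_chain_cl[OF age N age_subset_cl[OF age MC]] .
  moreover have "hom \<sigma> v V T" using hom_glue[OF N hm agree] unfolding v_def .
  moreover have "ext_prop \<sigma> C T V v"
    by (rule ext_prop_from_reps[OF age reps_spec(2,3)]) (rule stage_chain_extends_along[OF step N vm])
  ultimately show ?thesis by blast
qed

end

section \<open>Universal homogeneous homomorphisms\<close>

lemma sub_age_hom_into:
  assumes KU: "is_age \<sigma> \<U>" and KC: "is_age \<sigma> C" and sub: "C \<subseteq> \<U>" and T: "T \<in> cl \<sigma> \<U>"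
  shows "\<exists>A\<in>C. \<exists>h. hom \<sigma> h A T"
proof -
  obtain A where A: "A \<in> C" using KC unfolding is_age_def by blast
  have wA: "wf_struc \<sigma> A" and wT: "wf_struc \<sigma> T" using age_wf[OF KC A] cl_wf[OF T] .
  let ?G = "gen_struc \<sigma> A {}"
  have G: "?G \<in> C" using gen_struc_in_age[OF KC age_subset_cl[OF KC A]] by simp
  obtain \<phi> where "iso \<sigma> \<phi> ?G (gen_struc \<sigma> T {})"
    using gen_struc_empty_iso[OF KU wA wT] G sub gen_struc_in_age[OF KU T] by blast
  then have "hom \<sigma> \<phi> ?G T"
    using emb_into_superstr[OF _ substr_gen_struc[OF wT]] unfolding iso_def emb_def by blast
  then show ?thesis using G by blast
qed

theorem theorem3p3:
  fixes \<sigma> :: "('r, 'f::countable) sig"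
    and \<U> \<C> :: "('r, 'f) struc set"
    and T :: "('r, 'f) struc"
  assumes "strict_fraisse \<sigma> \<U>"
    and "T \<in> cl \<sigma> \<U>"
    and "fraisse \<sigma> \<C>"
    and "\<C> \<subseteq> \<U>"
    and "free_in \<sigma> \<C> \<U>"
  shows "\<exists>U u. universal_within \<sigma> \<C> u U T \<and> homogeneous_hom \<sigma> u U T \<and>
           (\<forall>U' u'. universal_within \<sigma> \<C> u' U' T \<and> homogeneous_hom \<sigma> u' U' T \<longrightarrow>
              (\<exists>h. iso \<sigma> h U' U \<and> (\<forall>x\<in>dom U'. u' x = u (h x))))"
proof -
  have KC: "is_age \<sigma> \<C>" and KU: "is_age \<sigma> \<U>"
    using assms(1,3) unfolding strict_fraisse_def fraisse_def by auto
  interpret ext_construction \<sigma> \<C> T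
    using KC strict_free_amalg_over[OF assms(1,2,4,5)] sub_age_hom_into[OF KU KC assms(4,2)]
    by unfold_locales
  obtain V v where V: "V \<in> cl \<sigma> \<C>" "hom \<sigma> v V T" and E: "ext_prop \<sigma> \<C> T V v"
    using ext_prop_exists by blast
  have "universal_within \<sigma> \<C> v V T"
    unfolding universal_within_def using V cl_wf[OF assms(2)] ext_prop_universal[OF KC E V] by blast
  moreover have "homogeneous_hom \<sigma> v V T" using ext_prop_homogeneous[OF KC E V] .
  moreover have "\<exists>h. iso \<sigma> h U' V \<and> (\<forall>x\<in>dom U'. u' x = v (h x))"
    if "universal_within \<sigma> \<C> u' U' T" "homogeneous_hom \<sigma> u' U' T" for U' u'
    using ext_prop_unique[OF KC E V that] .
  ultimately show ?thesis by blast
qed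

end
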